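(* Let $p_{\mathrm{data}}$ be a probability density on $\mathbb R^d$, let $E_\theta:\mathbb R^d\to\mathbb R$ be an energy function such that $\mathbf{x}\mapsto\exp(-E_\theta(\mathbf{x}))$ is uniformly bounded, and fix $t>0$, $w\ge 0$. Let $\mathbf{x}^1,\mathbf{x}^2,\dots$ be i.i.d. from $p_{\mathrm{data}}$, and $\boldsymbol\xi^i$, $\boldsymbol\xi'^{i,j}$ ($i,j\ge1$) i.i.d. $\mathcal N(0,\mathbf I)$, all independent. Define $$\mathcal L_{t,M,w}(\theta):=\frac1N\sum_{i=1}^N\log\Big(\frac wM+\frac1M\sum_{j=1}^M\exp\big(E_\theta(\mathbf{x}^i)-E_\theta(\mathbf{x}^i+\sqrt t\,\boldsymbol\xi^i+\sqrt t\,\boldsymbol\xi'^{i,j})\big)\Big).$$ Then for every $\varepsilon>0$ there exist $N$ and $M(N)$ such that $\big|\mathcal L_{t,M(N),w}(\theta)-\mathrm{ED}_{\gamma_t}(p_{\mathrm{data}},E_\theta)\big|<\varepsilon$ almost surely.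
   Context: $\gamma_t(\mathbf{y}-\mathbf{x})=(2\pi t)^{-d/2}\exp(-\|\mathbf{y}-\mathbf{x}\|^2/2t)$ is the Gaussian transition density. For an energy $U$, $U_{\gamma_t}(\mathbf{y}):=-\log\int\gamma_t(\mathbf{y}-\mathbf{x})\exp(-U(\mathbf{x}))\,\mathrm d\mathbf{x}$ and $\mathrm{ED}_{\gamma_t}(p_{\mathrm{data}},U):=\mathbb E_{p_{\mathrm{data}}(\mathbf{x})}[U(\mathbf{x})]-\mathbb E_{p_{\mathrm{data}}(\mathbf{x})}\mathbb E_{\gamma_t(\mathbf{y}-\mathbf{x})}[U_{\gamma_t}(\mathbf{y})]$. *)

theory Defs
  imports "HOL-Probability.Probability"
begin

definition gauss_kernel :: "real \<Rightarrow> 'a::euclidean_space \<Rightarrow> real" where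
  "gauss_kernel t v = (2 * pi * t) powr (- real DIM('a) / 2) * exp (- (norm v)\<^sup>2 / (2 * t))"

definition U_gamma :: "real \<Rightarrow> ('a::euclidean_space \<Rightarrow> real) \<Rightarrow> 'a \<Rightarrow> real" where
  "U_gamma t U y = - ln (\<integral>x. gauss_kernel t (y - x) * exp (- U x) \<partial>lborel)"

definition ED_gamma :: "real \<Rightarrow> ('a::euclidean_space \<Rightarrow> real) \<Rightarrow> ('a \<Rightarrow> real) \<Rightarrow> real" where
  "ED_gamma t p U = (\<integral>x. p x * U x \<partial>lborel)
     - (\<integral>x. p x * (\<integral>y. gauss_kernel t (y - x) * U_gamma t U y \<partial>lborel) \<partial>lborel)"

text \<open>Index set for the family of random variables: data samples x^i, noises xi^i and xi'^{i,j}.\<close>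
datatype idx = Xs nat | Xi nat | Xi' nat nat

text \<open>Empirical loss L_{t,M,w}(theta) with N outer samples and M inner samples (0-based indices).\<close>
definition emp_loss :: "real \<Rightarrow> nat \<Rightarrow> real \<Rightarrow> ('a::euclidean_space \<Rightarrow> real)
     \<Rightarrow> (idx \<Rightarrow> 'w \<Rightarrow> 'a) \<Rightarrow> nat \<Rightarrow> 'w \<Rightarrow> real" where
  "emp_loss t M w E Z N \<omega> =
     (1 / real N) * (\<Sum>i<N. ln (w / real M + (1 / real M) *
        (\<Sum>j<M. exp (E (Z (Xs i) \<omega>)
                   - E (Z (Xs i) \<omega> + sqrt t *\<^sub>R Z (Xi i) \<omega> + sqrt t *\<^sub>R Z (Xi' i j) \<omega>)))))"

end

theory Submission
  imports Defs
begin

text \<open>Let \<open>L i = E x\<^sub>i - U\<^sub>\<gamma>\<^sub>t (x\<^sub>i + sqrt t \<xi>\<^sub>i)\<close> be the summand one would get with infinitely many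
  inner samples. These are i.i.d. with mean \<open>ED\<^sub>\<gamma>\<^sub>t\<close>, so their averages converge almost surely by
  the strong law of large numbers, proved here along Etemadi's lines: truncation, Chebyshev's
  inequality along the geometric subsequence \<open>\<lfloor>a ^ n\<rfloor>\<close>, and interpolation between its terms.
  The actual summand is \<open>E x\<^sub>i + ln (w exp (- E x\<^sub>i) / M + G + S\<^sub>M)\<close>, where \<open>G = exp (- U\<^sub>\<gamma>\<^sub>t)\<close> at the
  noisy sample and \<open>S\<^sub>M\<close> is the mean of \<open>M\<close> bounded, pairwise orthogonal fluctuations. Hence
  \<open>S\<^sub>M\<close> tends to 0 in probability by Chebyshev, and since \<open>G > 0\<close> the summand converges in probability
  to \<open>L i\<close>. Choosing \<open>M(N)\<close> so that one of the first \<open>N\<close> summands is off by \<open>1/(N+1)\<close> with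
  probability at most \<open>2 ^ - N\<close>, Borel--Cantelli shows that almost surely the empirical loss
  eventually tracks the average of the \<open>L i\<close>.\<close>

section \<open>Averages along geometric subsequences\<close>

lemma LIMSEQ_cesaro_mean:
  fixes a :: "nat \<Rightarrow> real"
  assumes "a \<longlonglongrightarrow> L"
  shows "(\<lambda>n. (\<Sum>i<n. a i) / real n) \<longlonglongrightarrow> L"
proof (rule LIMSEQ_I)
  fix r :: real assume r: "0 < r"
  from LIMSEQ_D[OF assms, of "r/2"] r
  obtain N0 where N0: "\<And>i. i \<ge> N0 \<Longrightarrow> \<bar>a i - L\<bar> < r/2"
    by auto
  define K where "K = (\<Sum>i<N0. \<bar>a i - L\<bar>)"
  obtain N1 :: nat where N1: "K / (r/2) < N1"
    using reals_Archimedean2 by blast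
  show "\<exists>no. \<forall>n\<ge>no. norm ((\<Sum>i<n. a i) / real n - L) < r"
  proof (intro exI[of _ "max (Suc N0) N1"] allI impI)
    fix n assume n: "max (Suc N0) N1 \<le> n"
    hence "N0 \<le> n" and npos: "real n > 0" and "real N1 \<le> real n"
      by auto
    have split: "(\<Sum>i<n. a i - L) = (\<Sum>i<N0. a i - L) + (\<Sum>i\<in>{N0..<n}. a i - L)"
      using \<open>N0 \<le> n\<close> by (metis atLeast0LessThan sum.atLeastLessThan_concat zero_le)
    have head: "\<bar>\<Sum>i<N0. a i - L\<bar> \<le> K"
      unfolding K_def by (rule sum_abs)
    have "\<bar>\<Sum>i\<in>{N0..<n}. a i - L\<bar> \<le> (\<Sum>i\<in>{N0..<n}. \<bar>a i - L\<bar>)"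
      by (rule sum_abs)
    also have "\<dots> \<le> (\<Sum>i\<in>{N0..<n}. r/2)"
      using N0 by (intro sum_mono) (simp add: less_imp_le)
    also have "\<dots> \<le> real n * (r/2)"
      using r by simp
    finally have tail: "\<bar>\<Sum>i\<in>{N0..<n}. a i - L\<bar> \<le> real n * (r/2)" .
    have "K < real N1 * (r/2)"
      using N1 r by (simp add: pos_divide_less_eq)
    also have "\<dots> \<le> real n * (r/2)"
      using \<open>real N1 \<le> real n\<close> r by (intro mult_right_mono) auto
    finally have "K < real n * (r/2)" .
    hence "\<bar>\<Sum>i<n. a i - L\<bar> < real n * r"
      unfolding split using head tail by linarith
    moreover have "(\<Sum>i<n. a i) / real n - L = (\<Sum>i<n. a i - L) / real n"
      using npos by (simp add: sum_subtractf field_simps)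
    ultimately show "norm ((\<Sum>i<n. a i) / real n - L) < r"
      using npos by (simp add: abs_divide field_simps)
  qed
qed

lemma LIMSEQ_zero_iff_eventually_less_inverse_Suc:
  fixes f :: "nat \<Rightarrow> real"
  shows "f \<longlonglongrightarrow> 0 \<longleftrightarrow> (\<forall>i. eventually (\<lambda>n. \<bar>f n\<bar> < 1 / real (Suc i)) sequentially)"
proof
  assume lim: "f \<longlonglongrightarrow> 0"
  show "\<forall>i. eventually (\<lambda>n. \<bar>f n\<bar> < 1 / real (Suc i)) sequentially"
  proof
    fix i
    from LIMSEQ_D[OF lim, of "1 / real (Suc i)"]
    show "eventually (\<lambda>n. \<bar>f n\<bar> < 1 / real (Suc i)) sequentially"
      by (simp add: eventually_sequentially)
  qed
next
  assume small: "\<forall>i. eventually (\<lambda>n. \<bar>f n\<bar> < 1 / real (Suc i)) sequentially"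
  show "f \<longlonglongrightarrow> 0"
  proof (rule LIMSEQ_I)
    fix r :: real assume "0 < r"
    then obtain i where i: "inverse (real (Suc i)) < r"
      using reals_Archimedean by blast
    from small[rule_format, of i] show "\<exists>no. \<forall>n\<ge>no. norm (f n - 0) < r"
      using i by (force simp: eventually_sequentially inverse_eq_divide)
  qed
qed

definition floor_pow :: "real \<Rightarrow> nat \<Rightarrow> nat" where
  "floor_pow a n = nat \<lfloor>a ^ n\<rfloor>"

lemma floor_pow_0 [simp]: "floor_pow a 0 = 1"
  by (simp add: floor_pow_def)

lemma real_floor_pow:
  assumes "a > 1"
  shows "real (floor_pow a n) = of_int \<lfloor>a ^ n\<rfloor>"
  using assms by (simp add: floor_pow_def one_le_power)

lemma floor_pow_ge_1:
  assumes "a > 1"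
  shows "1 \<le> floor_pow a n"
  using assms by (simp add: floor_pow_def le_nat_iff one_le_power)

lemma floor_pow_le:
  assumes "a > 1"
  shows "real (floor_pow a n) \<le> a ^ n"
  using real_floor_pow[OF assms] by simp

lemma floor_pow_gt:
  assumes "a > 1"
  shows "a ^ n - 1 < real (floor_pow a n)"
proof -
  have "a ^ n - 1 < of_int \<lfloor>a ^ n\<rfloor>"
    by linarith
  then show ?thesis
    using real_floor_pow[OF assms] by simp
qed

lemma floor_pow_ge_half:
  assumes "a > 1"
  shows "a ^ n / 2 \<le> real (floor_pow a n)"
  using floor_pow_gt[OF assms, of n] floor_pow_ge_1[OF assms, of n] by linarith

lemma mono_floor_pow:
  assumes "a > 1"
  shows "mono (floor_pow a)"
  unfolding floor_pow_def mono_def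
  using assms by (intro allI impI nat_mono floor_mono power_increasing) auto

lemma filterlim_floor_pow_at_top:
  assumes a: "a > 1"
  shows "filterlim (floor_pow a) at_top sequentially"
  unfolding filterlim_at_top eventually_sequentially
proof
  fix Z :: nat
  obtain n where n: "2 * real Z < a ^ n"
    using real_arch_pow[OF a] by blast
  have "Z \<le> floor_pow a m" if "n \<le> m" for m
    using monoD[OF mono_floor_pow[OF a] that] floor_pow_ge_half[OF a, of n] n by linarith
  then show "\<exists>N. \<forall>m\<ge>N. Z \<le> floor_pow a m"
    by blast
qed

lemma eventually_floor_pow_Suc_le:
  assumes a: "a > 1"
  shows "eventually (\<lambda>n. real (floor_pow a (Suc n)) \<le> a\<^sup>2 * real (floor_pow a n)) sequentially"
  unfolding eventually_sequentially
proof -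
  obtain n0 where n0: "a\<^sup>2 / (a - 1) < a ^ n0"
    using real_arch_pow[OF a] by blast
  have "real (floor_pow a (Suc n)) \<le> a\<^sup>2 * real (floor_pow a n)" if "n0 \<le> n" for n
  proof -
    have "a\<^sup>2 / (a - 1) < a ^ n"
      using n0 power_increasing[OF that, of a] a by linarith
    hence "a\<^sup>2 \<le> a ^ n * (a - 1)"
      using a by (simp add: divide_less_eq)
    hence "a * a\<^sup>2 \<le> a * (a ^ n * (a - 1))"
      using a by simp
    moreover have "a\<^sup>2 \<le> a * a\<^sup>2"
      using a by (simp add: power2_eq_square)
    ultimately have "a ^ Suc n \<le> a\<^sup>2 * (a ^ n - 1)"
      by (simp add: algebra_simps power2_eq_square)
    also have "\<dots> \<le> a\<^sup>2 * real (floor_pow a n)"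
      using floor_pow_gt[OF a, of n] by (intro mult_left_mono) auto
    finally show ?thesis
      using floor_pow_le[OF a, of "Suc n"] by linarith
  qed
  then show "\<exists>N. \<forall>n\<ge>N. real (floor_pow a (Suc n)) \<le> a\<^sup>2 * real (floor_pow a n)"
    by blast
qed

lemma floor_pow_bracket:
  assumes a: "a > 1" and n: "floor_pow a m0 \<le> n"
  obtains m where "m0 \<le> m" "floor_pow a m \<le> n" "n < floor_pow a (Suc m)"
proof -
  have mono: "floor_pow a m \<le> floor_pow a m'" if "m \<le> m'" for m m'
    using mono_floor_pow[OF a] that by (simp add: mono_def)
  have "\<exists>m. n < floor_pow a (Suc m)"
  proof -
    obtain m where "Suc n \<le> floor_pow a m"
      using filterlim_floor_pow_at_top[OF a] by (auto simp: filterlim_at_top eventually_sequentially)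
    then show ?thesis
      using mono[of m "Suc m"] by (intro exI[of _ m]) simp
  qed
  define m where "m = (LEAST m. n < floor_pow a (Suc m))"
  have up: "n < floor_pow a (Suc m)"
    unfolding m_def by (rule LeastI_ex) fact
  have low: "floor_pow a m \<le> n"
  proof (cases m)
    case 0
    then show ?thesis using floor_pow_ge_1[OF a, of m0] n by simp
  next
    case (Suc m')
    then show ?thesis
      using not_less_Least[of m' "\<lambda>m. n < floor_pow a (Suc m)"] unfolding m_def by simp
  qed
  have "m0 \<le> m"
  proof (rule ccontr)
    assume "\<not> m0 \<le> m"
    then show False using mono[of "Suc m" m0] up n by simp
  qed
  then show thesis using low up by (rule that)
qed

lemma sum_inverse_powers_above_le:
  fixes a x :: real
  assumes a: "a > 1" and x: "0 < x"
  shows "(\<Sum>n<N. if x \<le> a ^ n then x / a ^ n else 0) \<le> a / (a - 1)"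
proof -
  obtain n0 where n0: "x \<le> a ^ n0" and least: "\<And>n. x \<le> a ^ n \<Longrightarrow> n0 \<le> n"
    using exists_least_iff[of "\<lambda>n. x \<le> a ^ n"] real_arch_pow[OF a, of x]
    by (metis less_imp_le not_le)
  define g where "g n = (if n0 \<le> n then (1/a) ^ (n - n0) else 0)" for n
  have "(\<lambda>n. g (n + n0)) sums (1 / (1 - 1/a))"
    unfolding g_def using a by (simp add: geometric_sums)
  hence g_sums: "g sums (1 / (1 - 1/a))"
    by (subst (asm) sums_iff_shift) (simp add: g_def)
  have "(\<Sum>n<N. if x \<le> a ^ n then x / a ^ n else 0) \<le> (\<Sum>n<N. g n)"
  proof (rule sum_mono)
    fix n
    show "(if x \<le> a ^ n then x / a ^ n else 0) \<le> g n"
    proof (cases "x \<le> a ^ n")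
      case True
      then have "n0 \<le> n" by (rule least)
      have "x / a ^ n \<le> a ^ n0 / a ^ n"
        using n0 a by (simp add: divide_right_mono)
      also have "\<dots> = (1/a) ^ (n - n0)"
        using \<open>n0 \<le> n\<close> a by (simp add: power_diff power_one_over)
      finally show ?thesis using True \<open>n0 \<le> n\<close> by (simp add: g_def)
    qed (use a in \<open>auto simp: g_def\<close>)
  qed
  also have "\<dots> \<le> 1 / (1 - 1/a)"
    using sum_le_suminf[OF sums_summable[OF g_sums], of "{..<N}"] a
    by (auto simp: g_def sums_unique[OF g_sums, symmetric])
  also have "\<dots> = a / (a - 1)"
    using a by (simp add: field_simps)
  finally show ?thesis .
qed

lemma sum_floor_pow_truncated_square_le:
  fixes a x :: real
  assumes a: "a > 1" and x: "0 \<le> x"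
  shows "(\<Sum>n<N. \<Sum>k<floor_pow a n. if x \<le> real (Suc k) then x\<^sup>2 / (real (floor_pow a n))\<^sup>2 else 0)
          \<le> 2 * a / (a - 1) * x"
proof (cases "x = 0")
  case False
  with x have x: "x > 0" by simp
  have "(\<Sum>k<floor_pow a n. if x \<le> real (Suc k) then x\<^sup>2 / (real (floor_pow a n))\<^sup>2 else 0)
          \<le> 2 * x * (if x \<le> a ^ n then x / a ^ n else 0)" for n
  proof (cases "x \<le> real (floor_pow a n)")
    case True
    have k1: "1 \<le> real (floor_pow a n)"
      using floor_pow_ge_1[OF a, of n] by simp
    have "(\<Sum>k<floor_pow a n. if x \<le> real (Suc k) then x\<^sup>2 / (real (floor_pow a n))\<^sup>2 else 0)
           \<le> (\<Sum>k<floor_pow a n. x\<^sup>2 / (real (floor_pow a n))\<^sup>2)"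
      by (intro sum_mono) auto
    also have "\<dots> = x\<^sup>2 / real (floor_pow a n)"
      using k1 by (simp add: power2_eq_square)
    also have "\<dots> \<le> x\<^sup>2 / (a ^ n / 2)"
    proof -
      have "0 < real (floor_pow a n) * a ^ n"
        using k1 a by simp
      then show ?thesis
        using floor_pow_ge_half[OF a, of n] a by (intro divide_left_mono) auto
    qed
    also have "\<dots> = 2 * x * (x / a ^ n)"
      by (simp add: power2_eq_square)
    finally show ?thesis
      using True floor_pow_le[OF a, of n] by auto
  next
    case False
    then have "(\<Sum>k<floor_pow a n. if x \<le> real (Suc k) then x\<^sup>2 / (real (floor_pow a n))\<^sup>2 else 0) = 0"
      by (intro sum.neutral) auto
    then show ?thesis
      using x a by auto
  qed
  then have "(\<Sum>n<N. \<Sum>k<floor_pow a n. if x \<le> real (Suc k) then x\<^sup>2 / (real (floor_pow a n))\<^sup>2 else 0)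
        \<le> 2 * x * (\<Sum>n<N. if x \<le> a ^ n then x / a ^ n else 0)"
    by (simp add: sum_distrib_left sum_mono)
  also have "\<dots> \<le> 2 * x * (a / (a - 1))"
    using sum_inverse_powers_above_le[OF a x] x by (intro mult_left_mono) auto
  finally show ?thesis
    by (simp add: ac_simps)
qed simp

lemma mean_bounds_of_bracket:
  fixes T :: "nat \<Rightarrow> real"
  assumes "mono T" and nonneg: "\<And>n. 0 \<le> T n"
    and k: "1 \<le> k" "k \<le> n" "n \<le> k'" and ratio: "real k' \<le> c * real k"
  shows "T k / real k / c \<le> T n / real n" and "T n / real n \<le> c * (T k' / real k')"
proof -
  have mono: "T k \<le> T n" "T n \<le> T k'"
    using monoD[OF \<open>mono T\<close>] k by auto
  have k': "1 \<le> real k'"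
    using k by simp
  then have "0 < c * real k"
    using ratio by linarith
  then have c: "0 < c"
    using k by (simp add: zero_less_mult_iff)
  have "T k / real k / c = T k / (c * real k)"
    by simp
  also have "\<dots> \<le> T k / real k'"
    using ratio k' nonneg[of k] by (intro divide_left_mono) auto
  also have "\<dots> \<le> T n / real n"
    using mono k nonneg[of k] by (intro frac_le) auto
  finally show "T k / real k / c \<le> T n / real n" .
  have "T n / real n \<le> T k' / real k"
    using mono k nonneg[of n] by (intro frac_le) auto
  also have "\<dots> = c * (T k' / (c * real k))"
    using c by simp
  also have "\<dots> \<le> c * (T k' / real k')"
    using ratio k' c nonneg[of k'] by (intro mult_left_mono divide_left_mono) auto
  finally show "T n / real n \<le> c * (T k' / real k')" .
qed

lemma eventually_mean_bounds_of_floor_pow: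
  fixes T :: "nat \<Rightarrow> real"
  assumes a: "a > 1"
    and mono: "mono T" and nonneg: "\<And>n. 0 \<le> T n"
    and \<eta>: "\<eta> > 0" and lim: "(\<lambda>m. T (floor_pow a m) / real (floor_pow a m)) \<longlonglongrightarrow> \<mu>"
  shows "eventually (\<lambda>n. (\<mu> - \<eta>) / a\<^sup>2 \<le> T n / real n \<and> T n / real n \<le> a\<^sup>2 * (\<mu> + \<eta>)) sequentially"
proof -
  let ?k = "floor_pow a"
  have "eventually (\<lambda>m. \<bar>T (?k m) / real (?k m) - \<mu>\<bar> < \<eta> \<and> real (?k (Suc m)) \<le> a\<^sup>2 * real (?k m)) sequentially"
    using LIMSEQ_D[OF lim \<eta>] eventually_floor_pow_Suc_le[OF a]
    by (auto simp: eventually_sequentially eventually_conj_iff)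
  then obtain m0 where m0: "\<And>m. m \<ge> m0 \<Longrightarrow>
      \<bar>T (?k m) / real (?k m) - \<mu>\<bar> < \<eta> \<and> real (?k (Suc m)) \<le> a\<^sup>2 * real (?k m)"
    by (auto simp: eventually_sequentially)
  have "(\<mu> - \<eta>) / a\<^sup>2 \<le> T n / real n \<and> T n / real n \<le> a\<^sup>2 * (\<mu> + \<eta>)" if n: "?k m0 \<le> n" for n
  proof -
    obtain m where "m0 \<le> m" and bracket: "?k m \<le> n" "n \<le> ?k (Suc m)"
      using floor_pow_bracket[OF a n] by (metis less_imp_le)
    then have ratio: "real (?k (Suc m)) \<le> a\<^sup>2 * real (?k m)"
      and near: "\<mu> - \<eta> < T (?k m) / real (?k m)" "T (?k (Suc m)) / real (?k (Suc m)) < \<mu> + \<eta>"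
      using m0[of m] m0[of "Suc m"] by auto
    note bounds = mean_bounds_of_bracket[OF mono nonneg floor_pow_ge_1[OF a] bracket ratio]
    have "(\<mu> - \<eta>) / a\<^sup>2 \<le> T (?k m) / real (?k m) / a\<^sup>2"
      using near a by (intro divide_right_mono) auto
    moreover have "a\<^sup>2 * (T (?k (Suc m)) / real (?k (Suc m))) \<le> a\<^sup>2 * (\<mu> + \<eta>)"
      using near by (intro mult_left_mono) auto
    ultimately show ?thesis
      using bounds by linarith
  qed
  then show ?thesis
    unfolding eventually_sequentially by blast
qed

lemma LIMSEQ_mean_of_floor_pow:
  fixes T :: "nat \<Rightarrow> real"
  assumes mono: "mono T" and nonneg: "\<And>n. 0 \<le> T n"
    and lim: "\<And>j. (\<lambda>m. T (floor_pow (1 + 1 / real (Suc j)) m) / real (floor_pow (1 + 1 / real (Suc j)) m))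
                  \<longlonglongrightarrow> \<mu>"
  shows "(\<lambda>n. T n / real n) \<longlonglongrightarrow> \<mu>"
proof (rule LIMSEQ_I)
  fix r :: real assume r: "0 < r"
  define e where "e j = 1 / real (Suc j)" for j
  have e: "e \<longlonglongrightarrow> 0"
    unfolding e_def using LIMSEQ_inverse_real_of_nat by (simp add: inverse_eq_divide)
  have a: "(\<lambda>j. 1 + e j) \<longlonglongrightarrow> 1"
    using tendsto_add[OF tendsto_const e, of 1] by simp
  have upper: "(\<lambda>j. (1 + e j)\<^sup>2 * (\<mu> + e j)) \<longlonglongrightarrow> \<mu>"
    using tendsto_mult[OF tendsto_power[OF a, of 2] tendsto_add[OF tendsto_const e, of \<mu>]] by simp
  have lower: "(\<lambda>j. (\<mu> - e j) / (1 + e j)\<^sup>2) \<longlonglongrightarrow> \<mu>"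
    using tendsto_divide[OF tendsto_diff[OF tendsto_const e, of \<mu>] tendsto_power[OF a, of 2]] by simp
  have "eventually (\<lambda>j. (1 + e j)\<^sup>2 * (\<mu> + e j) < \<mu> + r \<and> \<mu> - r < (\<mu> - e j) / (1 + e j)\<^sup>2) sequentially"
    using order_tendstoD(2)[OF upper, of "\<mu> + r"] order_tendstoD(1)[OF lower, of "\<mu> - r"] r
    by (auto elim: eventually_elim2)
  then obtain j where j: "(1 + e j)\<^sup>2 * (\<mu> + e j) < \<mu> + r" "\<mu> - r < (\<mu> - e j) / (1 + e j)\<^sup>2"
    by (auto simp: eventually_sequentially)
  have "1 + e j > 1" "e j > 0"
    by (auto simp: e_def)
  from eventually_mean_bounds_of_floor_pow[OF this(1) mono nonneg this(2) lim[of j, folded e_def]]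
  obtain N where "\<And>n. n \<ge> N \<Longrightarrow>
      (\<mu> - e j) / (1 + e j)\<^sup>2 \<le> T n / real n \<and> T n / real n \<le> (1 + e j)\<^sup>2 * (\<mu> + e j)"
    by (auto simp: eventually_sequentially)
  with j show "\<exists>no. \<forall>n\<ge>no. norm (T n / real n - \<mu>) < r"
    by (intro exI[of _ N] allI impI) force
qed

section \<open>The strong law of large numbers\<close>

lemma sum_indicator_greaterThan_Suc_le_min:
  fixes x :: real
  assumes "0 \<le> x"
  shows "(\<Sum>k<n. indicator {real (Suc k)<..} x :: real) \<le> min (real n) x"
  by (induction n) (use assms in \<open>auto simp: indicator_def\<close>)

definition truncate_at :: "nat \<Rightarrow> real \<Rightarrow> real" where
  "truncate_at k x = (if x \<le> real (Suc k) then x else 0)"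

lemma truncate_at_measurable [measurable]: "truncate_at k \<in> borel_measurable borel"
  unfolding truncate_at_def by measurable

lemma truncate_at_nonneg: "0 \<le> x \<Longrightarrow> 0 \<le> truncate_at k x"
  by (simp add: truncate_at_def)

lemma truncate_at_le: "truncate_at k x \<le> real (Suc k)"
  by (simp add: truncate_at_def)

lemma truncate_at_le_self: "0 \<le> x \<Longrightarrow> truncate_at k x \<le> x"
  by (simp add: truncate_at_def)

lemma LIMSEQ_truncate_at: "(\<lambda>k. truncate_at k x) \<longlonglongrightarrow> x"
proof (rule tendsto_eventually)
  obtain N where "x \<le> real N"
    using real_arch_simple by blast
  then show "eventually (\<lambda>k. truncate_at k x = x) sequentially"
    unfolding eventually_sequentially truncate_at_def by (intro exI[of _ N]) auto
qed

lemma LIMSEQ_mean_of_truncations: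
  fixes x y m :: "nat \<Rightarrow> real"
  assumes nonneg: "\<And>n. 0 \<le> x n"
    and eventually_eq: "eventually (\<lambda>n. y n = x n) sequentially"
    and m: "m \<longlonglongrightarrow> \<mu>"
    and blocks: "\<And>j. (\<lambda>n. (\<Sum>k<floor_pow (1 + 1 / real (Suc j)) n. y k - m k)
                        / real (floor_pow (1 + 1 / real (Suc j)) n)) \<longlonglongrightarrow> 0"
  shows "(\<lambda>n. (\<Sum>k<n. x k) / real n) \<longlonglongrightarrow> \<mu>"
proof (rule LIMSEQ_mean_of_floor_pow)
  show "mono (\<lambda>n. \<Sum>k<n. x k)"
    using nonneg by (intro monoI sum_mono2) auto
  show "0 \<le> (\<Sum>k<n. x k)" for n
    using nonneg by (simp add: sum_nonneg)
  obtain N0 where N0: "\<And>n. n \<ge> N0 \<Longrightarrow> y n = x n"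
    using eventually_eq by (auto simp: eventually_sequentially)
  have tail: "(\<Sum>k<N0. x k - y k) = (\<Sum>k<n. x k - y k)" if "N0 \<le> n" for n
  proof -
    have "(\<Sum>k<n. x k - y k) = (\<Sum>k<N0. x k - y k) + (\<Sum>k\<in>{N0..<n}. x k - y k)"
      using that by (metis atLeast0LessThan sum.atLeastLessThan_concat zero_le)
    also have "(\<Sum>k\<in>{N0..<n}. x k - y k) = 0"
      using N0 by (intro sum.neutral) auto
    finally show ?thesis by simp
  qed
  have x_y: "(\<lambda>n. (\<Sum>k<n. x k - y k) / real n) \<longlonglongrightarrow> 0"
    by (rule Lim_transform_eventually[OF lim_const_over_n]) (use tail in \<open>auto simp: eventually_sequentially\<close>)
  have m_mean: "(\<lambda>n. (\<Sum>k<n. m k) / real n) \<longlonglongrightarrow> \<mu>"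
    by (rule LIMSEQ_cesaro_mean[OF m])
  fix j
  let ?k = "floor_pow (1 + 1 / real (Suc j))"
  have k: "filterlim ?k at_top sequentially"
    by (rule filterlim_floor_pow_at_top) simp
  have "(\<lambda>n. (\<Sum>i<?k n. x i - y i) / real (?k n) + (\<Sum>i<?k n. y i - m i) / real (?k n)
             + (\<Sum>i<?k n. m i) / real (?k n)) \<longlonglongrightarrow> 0 + 0 + \<mu>"
    by (intro tendsto_add filterlim_compose[OF x_y k] blocks filterlim_compose[OF m_mean k])
  then show "(\<lambda>n. (\<Sum>i<?k n. x i) / real (?k n)) \<longlonglongrightarrow> \<mu>"
    by (simp add: sum_subtractf diff_divide_distrib)
qed

context prob_space
begin

lemma expectation_square_sum_orthogonal:
  fixes D :: "'i \<Rightarrow> 'a \<Rightarrow> real"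
  assumes fin: "finite I"
    and meas: "\<And>i. i \<in> I \<Longrightarrow> D i \<in> borel_measurable M"
    and bnd: "\<And>i \<omega>. i \<in> I \<Longrightarrow> \<bar>D i \<omega>\<bar> \<le> B i"
    and orth: "\<And>i j. i \<in> I \<Longrightarrow> j \<in> I \<Longrightarrow> i \<noteq> j \<Longrightarrow> expectation (\<lambda>\<omega>. D i \<omega> * D j \<omega>) = 0"
  shows "expectation (\<lambda>\<omega>. (\<Sum>i\<in>I. D i \<omega>)\<^sup>2) = (\<Sum>i\<in>I. expectation (\<lambda>\<omega>. (D i \<omega>)\<^sup>2))"
proof -
  have "integrable M (\<lambda>\<omega>. D i \<omega> * D j \<omega>)" if "i \<in> I" "j \<in> I" for i j
    using that bnd meas by (intro integrable_const_bound[where B="B i * B j"])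
      (auto simp: abs_mult intro!: mult_mono order_trans[OF abs_ge_zero bnd])
  then have "expectation (\<lambda>\<omega>. (\<Sum>i\<in>I. D i \<omega>)\<^sup>2) = (\<Sum>i\<in>I. \<Sum>j\<in>I. expectation (\<lambda>\<omega>. D i \<omega> * D j \<omega>))"
    by (simp add: power2_eq_square sum_product Bochner_Integration.integral_sum)
  also have "\<dots> = (\<Sum>i\<in>I. expectation (\<lambda>\<omega>. D i \<omega> * D i \<omega>))"
  proof (rule sum.cong[OF refl])
    fix i assume i: "i \<in> I"
    have "(\<Sum>j\<in>I. expectation (\<lambda>\<omega>. D i \<omega> * D j \<omega>))
        = expectation (\<lambda>\<omega>. D i \<omega> * D i \<omega>) + (\<Sum>j\<in>I-{i}. expectation (\<lambda>\<omega>. D i \<omega> * D j \<omega>))"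
      using fin i by (simp add: sum.remove)
    also have "(\<Sum>j\<in>I-{i}. expectation (\<lambda>\<omega>. D i \<omega> * D j \<omega>)) = 0"
      using orth i by (intro sum.neutral) auto
    finally show "(\<Sum>j\<in>I. expectation (\<lambda>\<omega>. D i \<omega> * D j \<omega>)) = expectation (\<lambda>\<omega>. D i \<omega> * D i \<omega>)"
      by simp
  qed
  finally show ?thesis
    by (simp add: power2_eq_square)
qed

lemma indep_vars_pair_compose:
  fixes X :: "'i \<Rightarrow> 'a \<Rightarrow> 'b"
  assumes indep: "indep_vars N X UNIV" and ij: "i \<noteq> j"
    and f: "f \<in> measurable (N i) borel" and g: "g \<in> measurable (N j) borel"
  shows "indep_var borel (\<lambda>\<omega>. f (X i \<omega>)) borel (\<lambda>\<omega>. g (X j \<omega>))"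
proof -
  have "indep_var borel ((\<lambda>h. f (h i)) \<circ> (\<lambda>\<omega>. restrict (\<lambda>k. X k \<omega>) {i}))
                  borel ((\<lambda>h. g (h j)) \<circ> (\<lambda>\<omega>. restrict (\<lambda>k. X k \<omega>) {j}))"
    using ij f g by (intro indep_var_compose[OF indep_var_restrict[OF indep]]) auto
  then show ?thesis
    by (simp add: comp_def)
qed

lemma integral_eq_of_distr_eq:
  fixes f :: "'b::topological_space \<Rightarrow> real"
  assumes "distr M borel X = distr M borel Y"
    and [measurable]: "X \<in> borel_measurable M" "Y \<in> borel_measurable M" "f \<in> borel_measurable borel"
  shows "(\<integral>\<omega>. f (X \<omega>) \<partial>M) = (\<integral>\<omega>. f (Y \<omega>) \<partial>M)"
proof -
  have "(\<integral>\<omega>. f (X \<omega>) \<partial>M) = integral\<^sup>L (distr M borel X) f"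
    by (simp add: integral_distr)
  also have "\<dots> = integral\<^sup>L (distr M borel Y) f"
    by (simp add: assms(1))
  also have "\<dots> = (\<integral>\<omega>. f (Y \<omega>) \<partial>M)"
    by (simp add: integral_distr)
  finally show ?thesis .
qed

lemma AE_eventually_truncate_at_eq:
  fixes X :: "nat \<Rightarrow> 'a \<Rightarrow> real"
  assumes [measurable]: "\<And>i. X i \<in> borel_measurable M"
    and ident: "\<And>i. distr M borel (X i) = distr M borel (X 0)"
    and int0: "integrable M (X 0)" and nonneg: "\<And>i \<omega>. 0 \<le> X i \<omega>"
  shows "AE \<omega> in M. eventually (\<lambda>n. truncate_at n (X n \<omega>) = X n \<omega>) sequentially"
proof -
  define A where "A n = {\<omega>\<in>space M. real (Suc n) < X n \<omega>}" for n
  have A_sets [measurable]: "A n \<in> sets M" for n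
    unfolding A_def by measurable
  have prob_A: "prob (A n) = expectation (\<lambda>\<omega>. indicator {real (Suc n)<..} (X 0 \<omega>))" for n
  proof -
    have "prob (A n) = expectation (indicator (A n))"
      by simp
    also have "\<dots> = expectation (\<lambda>\<omega>. indicator {real (Suc n)<..} (X n \<omega>))"
      by (rule Bochner_Integration.integral_cong) (auto simp: A_def indicator_def)
    also have "\<dots> = expectation (\<lambda>\<omega>. indicator {real (Suc n)<..} (X 0 \<omega>))"
      by (rule integral_eq_of_distr_eq[OF ident]) auto
    finally show ?thesis .
  qed
  have "(\<Sum>n<N. prob (A n)) \<le> expectation (X 0)" for N
  proof -
    have "(\<Sum>n<N. prob (A n)) = expectation (\<lambda>\<omega>. \<Sum>n<N. indicator {real (Suc n)<..} (X 0 \<omega>))"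
      unfolding prob_A by (subst Bochner_Integration.integral_sum) (auto intro!: integrable_const_bound[where B=1])
    also have "\<dots> \<le> expectation (X 0)"
    proof (rule integral_mono[OF _ int0])
      have count: "(\<Sum>n<N. indicator {real (Suc n)<..} (X 0 \<omega>)) \<le> min (real N) (X 0 \<omega>)" for \<omega>
        by (rule sum_indicator_greaterThan_Suc_le_min[OF nonneg])
      show "integrable M (\<lambda>\<omega>. \<Sum>n<N. indicator {real (Suc n)<..} (X 0 \<omega>) :: real)"
        using count by (intro integrable_const_bound[where B="real N"]) (auto simp: sum_nonneg)
      show "(\<Sum>n<N. indicator {real (Suc n)<..} (X 0 \<omega>)) \<le> X 0 \<omega>" for \<omega>
        using count[of \<omega>] by simp
    qed
    finally show ?thesis .
  qed
  then have "summable (\<lambda>n. prob (A n))"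
    by (intro summableI_nonneg_bounded) auto
  with borel_cantelli_AE1[OF A_sets]
  have "AE \<omega> in M. eventually (\<lambda>n. \<omega> \<in> space M - A n) sequentially"
    by (simp add: emeasure_eq_measure)
  then show ?thesis
    by (elim AE_mp eventually_mono[THEN AE_I2[THEN AE_mp]]) (auto elim!: eventually_mono simp: A_def truncate_at_def)
qed

lemma truncate_at_expectation_tendsto:
  fixes X :: "'a \<Rightarrow> real"
  assumes int: "integrable M X" and nonneg: "\<And>\<omega>. 0 \<le> X \<omega>"
  shows "(\<lambda>k. expectation (\<lambda>\<omega>. truncate_at k (X \<omega>))) \<longlonglongrightarrow> expectation X"
proof (rule integral_dominated_convergence[where w=X])
  show "AE \<omega> in M. norm (truncate_at k (X \<omega>)) \<le> X \<omega>" for k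
    using nonneg by (simp add: truncate_at_nonneg truncate_at_le_self)
qed (use int in \<open>auto intro: LIMSEQ_truncate_at\<close>)

lemma prob_abs_ge_le_second_moment:
  fixes f :: "'a \<Rightarrow> real"
  assumes [measurable]: "f \<in> borel_measurable M"
    and int: "integrable M (\<lambda>\<omega>. (f \<omega>)\<^sup>2)" and c: "0 < c"
  shows "prob {\<omega>\<in>space M. c \<le> \<bar>f \<omega>\<bar>} \<le> expectation (\<lambda>\<omega>. (f \<omega>)\<^sup>2) / c\<^sup>2"
proof -
  have "{\<omega>\<in>space M. c \<le> \<bar>f \<omega>\<bar>} = {\<omega>\<in>space M. c\<^sup>2 \<le> (f \<omega>)\<^sup>2}"
    using c by (auto simp: abs_le_square_iff[symmetric])
  then show ?thesis
    using integral_Markov_inequality_measure[OF int sets.top _, of "c\<^sup>2"] c by simp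
qed

lemma prob_truncated_sum_deviation_le:
  fixes X :: "nat \<Rightarrow> 'a \<Rightarrow> real"
  assumes indep: "indep_vars (\<lambda>_. borel) X UNIV"
    and ident: "\<And>i. distr M borel (X i) = distr M borel (X 0)"
    and nonneg: "\<And>i \<omega>. 0 \<le> X i \<omega>" and c: "0 < c"
  shows "prob {\<omega>\<in>space M. c \<le> \<bar>\<Sum>k<K. truncate_at k (X k \<omega>) - expectation (\<lambda>\<omega>. truncate_at k (X k \<omega>))\<bar>}
         \<le> (\<Sum>k<K. expectation (\<lambda>\<omega>. (truncate_at k (X 0 \<omega>))\<^sup>2)) / c\<^sup>2"
proof -
  have [measurable]: "X i \<in> borel_measurable M" for i
    using indep unfolding indep_vars_def by auto
  define m where "m k = expectation (\<lambda>\<omega>. truncate_at k (X k \<omega>))" for k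
  define D where "D k \<omega> = truncate_at k (X k \<omega>) - m k" for k \<omega>
  have D_meas [measurable]: "D k \<in> borel_measurable M" for k
    unfolding D_def by measurable
  have Y_bounds: "0 \<le> truncate_at k (X k \<omega>)" "truncate_at k (X k \<omega>) \<le> real (Suc k)" for k \<omega>
    by (simp_all only: truncate_at_le truncate_at_nonneg nonneg)
  have Y_int: "integrable M (\<lambda>\<omega>. truncate_at k (X k \<omega>))" for k
    using Y_bounds by (intro integrable_const_bound[where B="real (Suc k)"]) auto
  have m_nonneg: "0 \<le> m k" for k
    unfolding m_def using Y_bounds by simp
  have D_bound: "\<bar>D k \<omega>\<bar> \<le> real (Suc k) + m k" for k \<omega>
    using Y_bounds[of k \<omega>] m_nonneg[of k] by (auto simp: D_def)
  have D_int: "integrable M (D k)" for k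
    using D_bound by (intro integrable_const_bound[where B="real (Suc k) + m k"]) auto
  have D_mean: "expectation (D k) = 0" for k
    unfolding D_def m_def using Y_int by (simp add: prob_space)
  have D_square: "expectation (\<lambda>\<omega>. (D k \<omega>)\<^sup>2) \<le> expectation (\<lambda>\<omega>. (truncate_at k (X 0 \<omega>))\<^sup>2)" for k
  proof -
    have Y2_int: "integrable M (\<lambda>\<omega>. (truncate_at k (X k \<omega>))\<^sup>2)"
      using Y_bounds by (intro integrable_const_bound[where B="(real (Suc k))\<^sup>2"]) (auto intro!: power_mono)
    have "expectation (\<lambda>\<omega>. (D k \<omega>)\<^sup>2)
        = expectation (\<lambda>\<omega>. (truncate_at k (X k \<omega>))\<^sup>2) - (m k)\<^sup>2"
      unfolding D_def m_def using Y_int Y2_int by (rule variance_eq)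
    also have "\<dots> \<le> expectation (\<lambda>\<omega>. (truncate_at k (X k \<omega>))\<^sup>2)"
      by simp
    also have "\<dots> = expectation (\<lambda>\<omega>. (truncate_at k (X 0 \<omega>))\<^sup>2)"
      by (rule integral_eq_of_distr_eq[OF ident]) auto
    finally show ?thesis .
  qed
  have orth: "expectation (\<lambda>\<omega>. D i \<omega> * D j \<omega>) = 0" if "i \<noteq> j" for i j
  proof -
    have "indep_var borel (D i) borel (D j)"
      using indep_vars_pair_compose[OF indep that, of "\<lambda>x. truncate_at i x - m i" "\<lambda>x. truncate_at j x - m j"]
      by (simp add: D_def[abs_def])
    then show ?thesis
      using indep_var_lebesgue_integral[OF _ D_int D_int] D_mean by simp
  qed
  have sum_square: "expectation (\<lambda>\<omega>. (\<Sum>k<K. D k \<omega>)\<^sup>2) = (\<Sum>k<K. expectation (\<lambda>\<omega>. (D k \<omega>)\<^sup>2))"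
    by (rule expectation_square_sum_orthogonal[OF _ _ D_bound orth]) auto
  have "prob {\<omega>\<in>space M. c \<le> \<bar>\<Sum>k<K. D k \<omega>\<bar>} \<le> expectation (\<lambda>\<omega>. (\<Sum>k<K. D k \<omega>)\<^sup>2) / c\<^sup>2"
  proof (rule prob_abs_ge_le_second_moment[OF _ _ c])
    have "\<bar>\<Sum>k<K. D k \<omega>\<bar> \<le> (\<Sum>k<K. real (Suc k) + m k)" for \<omega>
      using D_bound by (intro order_trans[OF sum_abs] sum_mono)
    then show "integrable M (\<lambda>\<omega>. (\<Sum>k<K. D k \<omega>)\<^sup>2)"
      by (intro integrable_const_bound[where B="(\<Sum>k<K. real (Suc k) + m k)\<^sup>2"])
        (auto simp: abs_le_square_iff[symmetric] intro!: AE_I2 order_trans[OF _ abs_ge_self])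
  qed simp
  also have "\<dots> \<le> (\<Sum>k<K. expectation (\<lambda>\<omega>. (truncate_at k (X 0 \<omega>))\<^sup>2)) / c\<^sup>2"
    unfolding sum_square by (intro divide_right_mono sum_mono D_square) simp
  finally show ?thesis
    by (simp add: D_def m_def sum_subtractf)
qed

lemma sum_prob_truncated_block_deviation_le:
  fixes X :: "nat \<Rightarrow> 'a \<Rightarrow> real"
  assumes indep: "indep_vars (\<lambda>_. borel) X UNIV"
    and ident: "\<And>i. distr M borel (X i) = distr M borel (X 0)"
    and int0: "integrable M (X 0)" and nonneg: "\<And>i \<omega>. 0 \<le> X i \<omega>"
    and a: "a > 1" and \<epsilon>: "0 < \<epsilon>"
  shows "(\<Sum>n<N. prob {\<omega>\<in>space M. \<epsilon> * real (floor_pow a n) \<le>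
            \<bar>\<Sum>k<floor_pow a n. truncate_at k (X k \<omega>) - expectation (\<lambda>\<omega>. truncate_at k (X k \<omega>))\<bar>})
         \<le> 2 * a / (a - 1) * expectation (X 0) / \<epsilon>\<^sup>2"
proof -
  have [measurable]: "X i \<in> borel_measurable M" for i
    using indep unfolding indep_vars_def by auto
  let ?K = "floor_pow a"
  define h where "h n k x = (if x \<le> real (Suc k) then x\<^sup>2 / (real (?K n))\<^sup>2 else 0)" for n k x
  have K_pos: "0 < real (?K n)" for n
    using floor_pow_ge_1[OF a, of n] by simp
  have h_int: "integrable M (\<lambda>\<omega>. h n k (X 0 \<omega>))" for n k
    unfolding h_def using nonneg
    by (intro integrable_const_bound[where B="(real (Suc k))\<^sup>2 / (real (?K n))\<^sup>2"])
      (auto intro!: divide_right_mono power_mono)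
  have block: "(\<Sum>k<?K n. expectation (\<lambda>\<omega>. (truncate_at k (X 0 \<omega>))\<^sup>2)) / (\<epsilon> * real (?K n))\<^sup>2
      = (\<Sum>k<?K n. expectation (\<lambda>\<omega>. h n k (X 0 \<omega>))) / \<epsilon>\<^sup>2" for n
  proof -
    have "expectation (\<lambda>\<omega>. h n k (X 0 \<omega>)) = expectation (\<lambda>\<omega>. (truncate_at k (X 0 \<omega>))\<^sup>2) / (real (?K n))\<^sup>2" for k
      unfolding integral_divide_zero[symmetric]
      by (rule Bochner_Integration.integral_cong) (auto simp: h_def truncate_at_def)
    then show ?thesis
      by (simp add: sum_divide_distrib power_mult_distrib mult.commute)
  qed
  have "(\<Sum>n<N. prob {\<omega>\<in>space M. \<epsilon> * real (?K n) \<le>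
            \<bar>\<Sum>k<?K n. truncate_at k (X k \<omega>) - expectation (\<lambda>\<omega>. truncate_at k (X k \<omega>))\<bar>})
        \<le> (\<Sum>n<N. (\<Sum>k<?K n. expectation (\<lambda>\<omega>. (truncate_at k (X 0 \<omega>))\<^sup>2)) / (\<epsilon> * real (?K n))\<^sup>2)"
    using K_pos \<epsilon> by (intro sum_mono prob_truncated_sum_deviation_le[OF indep ident nonneg]) simp
  also have "\<dots> = expectation (\<lambda>\<omega>. \<Sum>n<N. \<Sum>k<?K n. h n k (X 0 \<omega>)) / \<epsilon>\<^sup>2"
    unfolding block using h_int
    by (simp add: Bochner_Integration.integral_sum Bochner_Integration.integrable_sum sum_divide_distrib)
  also have "\<dots> \<le> expectation (\<lambda>\<omega>. 2 * a / (a - 1) * X 0 \<omega>) / \<epsilon>\<^sup>2"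
  proof (intro divide_right_mono integral_mono)
    show "(\<Sum>n<N. \<Sum>k<?K n. h n k (X 0 \<omega>)) \<le> 2 * a / (a - 1) * X 0 \<omega>" for \<omega>
      unfolding h_def by (rule sum_floor_pow_truncated_square_le[OF a nonneg])
  qed (use h_int int0 in \<open>auto simp: Bochner_Integration.integrable_sum\<close>)
  also have "\<dots> = 2 * a / (a - 1) * expectation (X 0) / \<epsilon>\<^sup>2"
    by simp
  finally show ?thesis .
qed

lemma AE_truncated_block_mean_tendsto:
  fixes X :: "nat \<Rightarrow> 'a \<Rightarrow> real"
  assumes indep: "indep_vars (\<lambda>_. borel) X UNIV"
    and ident: "\<And>i. distr M borel (X i) = distr M borel (X 0)"
    and int0: "integrable M (X 0)" and nonneg: "\<And>i \<omega>. 0 \<le> X i \<omega>"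
    and a: "a > 1"
  shows "AE \<omega> in M. (\<lambda>n. (\<Sum>k<floor_pow a n. truncate_at k (X k \<omega>) - expectation (\<lambda>\<omega>. truncate_at k (X k \<omega>)))
                        / real (floor_pow a n)) \<longlonglongrightarrow> 0"
proof -
  have [measurable]: "X i \<in> borel_measurable M" for i
    using indep unfolding indep_vars_def by auto
  let ?K = "floor_pow a"
  let ?S = "\<lambda>n \<omega>. \<Sum>k<?K n. truncate_at k (X k \<omega>) - expectation (\<lambda>\<omega>. truncate_at k (X k \<omega>))"
  define B where "B i n = {\<omega>\<in>space M. 1 / real (Suc i) * real (?K n) \<le> \<bar>?S n \<omega>\<bar>}" for i n
  have B_sets [measurable]: "B i n \<in> sets M" for i n
    unfolding B_def by measurable
  have "AE \<omega> in M. eventually (\<lambda>n. \<omega> \<in> space M - B i n) sequentially" for i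
  proof -
    have "summable (\<lambda>n. prob (B i n))"
      unfolding B_def
      by (rule summableI_nonneg_bounded[OF _ sum_prob_truncated_block_deviation_le[OF indep ident int0 nonneg a]])
        auto
    with borel_cantelli_AE1[OF B_sets] show ?thesis
      by (simp add: emeasure_eq_measure)
  qed
  then have "AE \<omega> in M. \<forall>i. eventually (\<lambda>n. \<omega> \<in> space M - B i n) sequentially"
    by (simp add: AE_all_countable)
  then show ?thesis
  proof eventually_elim
    case (elim \<omega>)
    have small: "\<bar>?S n \<omega> / real (?K n)\<bar> < 1 / real (Suc i)" if "\<omega> \<in> space M - B i n" for i n
      using that floor_pow_ge_1[OF a, of n] by (auto simp: B_def abs_divide divide_less_eq not_le)
    show ?case
      unfolding LIMSEQ_zero_iff_eventually_less_inverse_Suc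
    proof
      fix i
      from elim[rule_format, of i]
      show "eventually (\<lambda>n. \<bar>?S n \<omega> / real (?K n)\<bar> < 1 / real (Suc i)) sequentially"
        by (rule eventually_mono) (rule small)
    qed
  qed
qed

theorem strong_law_of_large_numbers_nonneg:
  fixes X :: "nat \<Rightarrow> 'a \<Rightarrow> real"
  assumes indep: "indep_vars (\<lambda>_. borel) X UNIV"
    and ident: "\<And>i. distr M borel (X i) = distr M borel (X 0)"
    and int0: "integrable M (X 0)" and nonneg: "\<And>i \<omega>. 0 \<le> X i \<omega>"
  shows "AE \<omega> in M. (\<lambda>n. (\<Sum>i<n. X i \<omega>) / real n) \<longlonglongrightarrow> expectation (X 0)"
proof -
  have meas [measurable]: "X i \<in> borel_measurable M" for i
    using indep unfolding indep_vars_def by auto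
  have "expectation (\<lambda>\<omega>. truncate_at k (X k \<omega>)) = expectation (\<lambda>\<omega>. truncate_at k (X 0 \<omega>))" for k
    by (rule integral_eq_of_distr_eq[OF ident]) auto
  then have means: "(\<lambda>k. expectation (\<lambda>\<omega>. truncate_at k (X k \<omega>))) \<longlonglongrightarrow> expectation (X 0)"
    using truncate_at_expectation_tendsto[OF int0 nonneg] by simp
  have "AE \<omega> in M. \<forall>j. (\<lambda>n. (\<Sum>k<floor_pow (1 + 1 / real (Suc j)) n.
          truncate_at k (X k \<omega>) - expectation (\<lambda>\<omega>. truncate_at k (X k \<omega>)))
          / real (floor_pow (1 + 1 / real (Suc j)) n)) \<longlonglongrightarrow> 0"
    by (subst AE_all_countable) (auto intro!: AE_truncated_block_mean_tendsto[OF indep ident int0 nonneg])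
  with AE_eventually_truncate_at_eq[of X, OF meas ident int0 nonneg] show ?thesis
    by eventually_elim (rule LIMSEQ_mean_of_truncations[OF nonneg _ means], auto)
qed

theorem strong_law_of_large_numbers:
  fixes X :: "nat \<Rightarrow> 'a \<Rightarrow> real"
  assumes indep: "indep_vars (\<lambda>_. borel) X UNIV"
    and ident: "\<And>i. distr M borel (X i) = distr M borel (X 0)"
    and int0: "integrable M (X 0)"
  shows "AE \<omega> in M. (\<lambda>n. (\<Sum>i<n. X i \<omega>) / real n) \<longlonglongrightarrow> expectation (X 0)"
proof -
  have [measurable]: "X i \<in> borel_measurable M" for i
    using indep unfolding indep_vars_def by auto
  have part: "AE \<omega> in M. (\<lambda>n. (\<Sum>i<n. f (X i \<omega>)) / real n) \<longlonglongrightarrow> expectation (\<lambda>\<omega>. f (X 0 \<omega>))"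
    if [measurable]: "f \<in> borel_measurable borel" and "\<And>x. 0 \<le> f x"
      and "integrable M (\<lambda>\<omega>. f (X 0 \<omega>))" for f
  proof (rule strong_law_of_large_numbers_nonneg)
    show "indep_vars (\<lambda>_. borel) (\<lambda>i \<omega>. f (X i \<omega>)) UNIV"
      by (rule indep_vars_compose2[OF indep]) simp
    show "distr M borel (\<lambda>\<omega>. f (X i \<omega>)) = distr M borel (\<lambda>\<omega>. f (X 0 \<omega>))" for i
    proof -
      have "distr M borel (\<lambda>\<omega>. f (X i \<omega>)) = distr (distr M borel (X i)) borel f"
        by (simp add: distr_distr comp_def)
      also have "\<dots> = distr M borel (\<lambda>\<omega>. f (X 0 \<omega>))"
        by (simp add: ident[of i] distr_distr comp_def)
      finally show ?thesis .
    qed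
  qed (use that in auto)
  have int_pos: "integrable M (\<lambda>\<omega>. max 0 (X 0 \<omega>))" and int_neg: "integrable M (\<lambda>\<omega>. max 0 (- X 0 \<omega>))"
    using int0 by (auto intro: integrable_max)
  have split: "x = max 0 x - max 0 (- x)" for x :: real
    by (simp add: max_def)
  have "expectation (X 0) = expectation (\<lambda>\<omega>. max 0 (X 0 \<omega>) - max 0 (- X 0 \<omega>))"
    by (rule Bochner_Integration.integral_cong) (simp_all only: split[symmetric])
  also have "\<dots> = expectation (\<lambda>\<omega>. max 0 (X 0 \<omega>)) - expectation (\<lambda>\<omega>. max 0 (- X 0 \<omega>))"
    using int_pos int_neg by simp
  finally have expectation_split: "expectation (X 0)
      = expectation (\<lambda>\<omega>. max 0 (X 0 \<omega>)) - expectation (\<lambda>\<omega>. max 0 (- X 0 \<omega>))" .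
  have mean_split: "(\<Sum>i<n. X i \<omega>) / real n
      = (\<Sum>i<n. max 0 (X i \<omega>)) / real n - (\<Sum>i<n. max 0 (- X i \<omega>)) / real n" for n \<omega>
  proof -
    have "(\<Sum>i<n. X i \<omega>) = (\<Sum>i<n. max 0 (X i \<omega>) - max 0 (- X i \<omega>))"
      by (rule sum.cong) (simp_all only: split[symmetric])
    then show ?thesis
      by (simp add: sum_subtractf diff_divide_distrib)
  qed
  have "AE \<omega> in M. (\<lambda>n. (\<Sum>i<n. max 0 (X i \<omega>)) / real n) \<longlonglongrightarrow> expectation (\<lambda>\<omega>. max 0 (X 0 \<omega>))"
    by (rule part) (use int_pos in auto)
  moreover have "AE \<omega> in M. (\<lambda>n. (\<Sum>i<n. max 0 (- X i \<omega>)) / real n) \<longlonglongrightarrow> expectation (\<lambda>\<omega>. max 0 (- X 0 \<omega>))"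
    by (rule part) (use int_neg in auto)
  ultimately show ?thesis
    unfolding mean_split expectation_split by eventually_elim (auto intro: tendsto_diff)
qed

end

section \<open>The Gaussian kernel\<close>

lemma gauss_kernel_measurable [measurable]: "gauss_kernel t \<in> borel_measurable borel"
  unfolding gauss_kernel_def[abs_def] by measurable

lemma gauss_kernel_nonneg: "0 \<le> gauss_kernel t v"
  unfolding gauss_kernel_def by simp

lemma gauss_kernel_pos: "t > 0 \<Longrightarrow> 0 < gauss_kernel t v"
  unfolding gauss_kernel_def by simp

lemma gauss_kernel_minus_commute: "gauss_kernel t (y - x) = gauss_kernel t (x - y)"
  unfolding gauss_kernel_def by (simp add: norm_minus_commute)

lemma gauss_kernel_scale:
  fixes u :: "'a::euclidean_space"
  assumes t: "t > 0"
  shows "(sqrt t) ^ DIM('a) * gauss_kernel t (sqrt t *\<^sub>R u) = gauss_kernel 1 u"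
proof -
  have norm: "(norm (sqrt t *\<^sub>R u))\<^sup>2 = t * (norm u)\<^sup>2"
    using t by (simp add: power_mult_distrib)
  have exp: "exp (- (t * (norm u)\<^sup>2) / (2 * t)) = exp (- (norm u)\<^sup>2 / 2)"
    using t by simp
  have const: "(2 * pi * t) powr (- real DIM('a) / 2)
      = (2 * pi) powr (- real DIM('a) / 2) * t powr (- real DIM('a) / 2)"
    using t by (simp add: powr_mult)
  have root: "(sqrt t) ^ DIM('a) = t powr (real DIM('a) / 2)"
    using t by (simp add: sqrt_def root_powr_inverse powr_realpow[symmetric] powr_powr)
  have "t powr (real DIM('a) / 2) * t powr (- real DIM('a) / 2) = 1"
    using t by (simp add: powr_add[symmetric])
  then show ?thesis
    unfolding gauss_kernel_def norm exp const root by (simp add: algebra_simps)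
qed

lemma nn_integral_gauss_kernel_shift_scale:
  fixes f :: "'a::euclidean_space \<Rightarrow> ennreal" and x :: 'a
  assumes t: "t > 0" and [measurable]: "f \<in> borel_measurable borel"
  shows "(\<integral>\<^sup>+u. ennreal (gauss_kernel 1 u) * f (x + sqrt t *\<^sub>R u) \<partial>lborel)
       = (\<integral>\<^sup>+y. ennreal (gauss_kernel t (y - x)) * f y \<partial>lborel)"
proof -
  have "(\<integral>\<^sup>+y. ennreal (gauss_kernel t (y - x)) * f y \<partial>lborel)
      = (\<integral>\<^sup>+y. ennreal (gauss_kernel t (y - x)) * f y
           \<partial>density (distr lborel borel (\<lambda>u. x + sqrt t *\<^sub>R u)) (\<lambda>_. \<bar>sqrt t\<bar> ^ DIM('a)))"
    using lborel_affine[of "sqrt t" x] t by simp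
  also have "\<dots> = (\<integral>\<^sup>+u. \<bar>sqrt t\<bar> ^ DIM('a) * (ennreal (gauss_kernel t (sqrt t *\<^sub>R u)) * f (x + sqrt t *\<^sub>R u)) \<partial>lborel)"
    by (simp add: nn_integral_density nn_integral_distr)
  also have "\<dots> = (\<integral>\<^sup>+u. ennreal (gauss_kernel 1 u) * f (x + sqrt t *\<^sub>R u) \<partial>lborel)"
  proof (rule nn_integral_cong)
    fix u :: 'a
    have "\<bar>sqrt t\<bar> ^ DIM('a) * ennreal (gauss_kernel t (sqrt t *\<^sub>R u))
        = ennreal ((sqrt t) ^ DIM('a) * gauss_kernel t (sqrt t *\<^sub>R u))"
      using t by (simp add: ennreal_mult[symmetric] gauss_kernel_nonneg)
    then show "\<bar>sqrt t\<bar> ^ DIM('a) * (ennreal (gauss_kernel t (sqrt t *\<^sub>R u)) * f (x + sqrt t *\<^sub>R u))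
        = ennreal (gauss_kernel 1 u) * f (x + sqrt t *\<^sub>R u)"
      by (simp add: gauss_kernel_scale[OF t] mult.assoc[symmetric])
  qed
  finally show ?thesis ..
qed

lemma integral_gauss_kernel_shift_scale:
  fixes f :: "'a::euclidean_space \<Rightarrow> real" and x :: 'a
  assumes t: "t > 0" and [measurable]: "f \<in> borel_measurable borel"
  shows "(\<integral>u. gauss_kernel 1 u * f (x + sqrt t *\<^sub>R u) \<partial>lborel)
       = (\<integral>y. gauss_kernel t (y - x) * f y \<partial>lborel)"
proof -
  have "(\<integral>y. gauss_kernel t (y - x) * f y \<partial>lborel)
      = (\<integral>y. gauss_kernel t (y - x) * f y
           \<partial>density (distr lborel borel (\<lambda>u. x + sqrt t *\<^sub>R u)) (\<lambda>_. \<bar>sqrt t\<bar> ^ DIM('a)))"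
    using lborel_affine[of "sqrt t" x] t by simp
  also have "\<dots> = (\<integral>u. (sqrt t) ^ DIM('a) * (gauss_kernel t (sqrt t *\<^sub>R u) * f (x + sqrt t *\<^sub>R u)) \<partial>lborel)"
    using t by (subst integral_real_density) (auto simp: integral_distr)
  also have "\<dots> = (\<integral>u. gauss_kernel 1 u * f (x + sqrt t *\<^sub>R u) \<partial>lborel)"
    by (simp add: gauss_kernel_scale[OF t] mult.assoc[symmetric])
  finally show ?thesis ..
qed

lemma distr_lborel_eq_distr_borel: "distr M lborel f = distr M borel f"
  by (rule distr_cong) auto

section \<open>The sampling model\<close>

locale ed_sampling = prob_space P for P :: "'w measure" +
  fixes Z :: "idx \<Rightarrow> 'w \<Rightarrow> 'a::euclidean_space"
    and p :: "'a \<Rightarrow> real" and E :: "'a \<Rightarrow> real" and t w :: real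
  assumes p_meas: "p \<in> borel_measurable lborel"
    and p_nonneg: "\<And>x. 0 \<le> p x"
    and E_meas [measurable]: "E \<in> borel_measurable borel"
    and E_bdd: "\<exists>C. \<forall>x. exp (- E x) \<le> C"
    and E_integrable: "integrable lborel (\<lambda>x. p x * E x)"
    and UG_integrable: "integrable (lborel \<Otimes>\<^sub>M lborel)
          (\<lambda>(x, y). p x * gauss_kernel t (y - x) * U_gamma t E y)"
    and t_pos: "t > 0" and w_nonneg: "w \<ge> 0"
    and indep: "indep_vars (\<lambda>_. borel) Z UNIV"
    and dist_x: "\<And>i. distributed P lborel (Z (Xs i)) (\<lambda>x. ennreal (p x))"
    and dist_xi: "\<And>i. distributed P lborel (Z (Xi i)) (\<lambda>x. ennreal (gauss_kernel 1 x))"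
    and dist_xi': "\<And>i j. distributed P lborel (Z (Xi' i j)) (\<lambda>x. ennreal (gauss_kernel 1 x))"
begin

lemma Z_measurable [measurable]: "Z k \<in> borel_measurable P"
  using indep unfolding indep_vars_def by auto

lemma p_measurable [measurable]: "p \<in> borel_measurable borel"
  using p_meas by simp

definition weight_bound :: real where
  "weight_bound = (SOME C. \<forall>x. exp (- E x) \<le> C)"

lemma exp_neg_le_weight_bound: "exp (- E x) \<le> weight_bound"
  using someI_ex[OF E_bdd] unfolding weight_bound_def by blast

lemma weight_bound_pos: "0 < weight_bound"
  using exp_neg_le_weight_bound[of 0] by (metis exp_gt_zero order_less_le_trans)

definition smoothed_weight :: "'a \<Rightarrow> real" where
  "smoothed_weight y = (\<integral>x. gauss_kernel t (y - x) * exp (- E x) \<partial>lborel)"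

lemma U_gamma_eq: "U_gamma t E y = - ln (smoothed_weight y)"
  unfolding U_gamma_def smoothed_weight_def ..

lemma smoothed_weight_measurable [measurable]: "smoothed_weight \<in> borel_measurable borel"
  unfolding smoothed_weight_def by measurable

lemma U_gamma_measurable [measurable]: "U_gamma t E \<in> borel_measurable borel"
  unfolding U_gamma_eq[abs_def] by measurable

lemma smoothed_weight_eq_gauss_integral:
  "smoothed_weight y = (\<integral>u. gauss_kernel 1 u * exp (- E (y + sqrt t *\<^sub>R u)) \<partial>lborel)"
proof -
  have "smoothed_weight y = (\<integral>x. gauss_kernel t (x - y) * exp (- E x) \<partial>lborel)"
    unfolding smoothed_weight_def by (simp add: gauss_kernel_minus_commute)
  also have "\<dots> = (\<integral>u. gauss_kernel 1 u * exp (- E (y + sqrt t *\<^sub>R u)) \<partial>lborel)"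
    by (rule integral_gauss_kernel_shift_scale[OF t_pos, symmetric]) measurable
  finally show ?thesis .
qed

text \<open>The normalisation of the standard Gaussian is read off from the distribution of the noise.\<close>
lemma nn_integral_gauss_kernel_1: "(\<integral>\<^sup>+u. ennreal (gauss_kernel 1 u) \<partial>(lborel :: 'a measure)) = 1"
proof -
  have "distr P lborel (Z (Xi 0)) = density lborel (\<lambda>x. ennreal (gauss_kernel 1 x))"
    using dist_xi[of 0] by (simp add: distributed_distr_eq_density)
  moreover have "emeasure (distr P lborel (Z (Xi 0))) UNIV = 1"
    using emeasure_space_1 by (simp add: emeasure_distr)
  ultimately show ?thesis
    by (simp add: emeasure_density)
qed

lemma integrable_gauss_kernel_1: "integrable lborel (gauss_kernel 1 :: 'a \<Rightarrow> real)"
  using nn_integral_gauss_kernel_1 by (intro integrableI_nonneg) (auto simp: gauss_kernel_nonneg)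

lemma integral_gauss_kernel_1: "(\<integral>u. gauss_kernel 1 u \<partial>(lborel :: 'a measure)) = 1"
  using nn_integral_gauss_kernel_1 by (subst integral_eq_nn_integral) (auto simp: gauss_kernel_nonneg)

lemma integrable_gauss_kernel_1_mult_bounded:
  fixes f :: "'a \<Rightarrow> real"
  assumes [measurable]: "f \<in> borel_measurable borel" and bound: "\<And>x. \<bar>f x\<bar> \<le> B"
  shows "integrable lborel (\<lambda>u. gauss_kernel 1 u * f u)"
proof (rule Bochner_Integration.integrable_bound[where f="\<lambda>u. B * gauss_kernel 1 u"])
  show "integrable lborel (\<lambda>u::'a. B * gauss_kernel 1 u)"
    using integrable_gauss_kernel_1 by simp
  show "AE u in lborel. norm (gauss_kernel 1 u * f u) \<le> norm (B * gauss_kernel 1 u)"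
  proof (rule AE_I2)
    fix u
    have "gauss_kernel 1 u * \<bar>f u\<bar> \<le> gauss_kernel 1 u * B"
      using bound by (intro mult_left_mono) (auto simp: gauss_kernel_nonneg)
    then show "norm (gauss_kernel 1 u * f u) \<le> norm (B * gauss_kernel 1 u)"
      using order_trans[OF abs_ge_zero bound] by (simp add: abs_mult gauss_kernel_nonneg mult.commute)
  qed
qed measurable

lemma integrable_smoothed_weight_integrand:
  "integrable lborel (\<lambda>u. gauss_kernel 1 u * exp (- E (y + sqrt t *\<^sub>R u)))"
  by (rule integrable_gauss_kernel_1_mult_bounded[where B=weight_bound])
    (use exp_neg_le_weight_bound in auto)

lemma smoothed_weight_le: "smoothed_weight y \<le> weight_bound"
proof -
  have "smoothed_weight y \<le> (\<integral>u. gauss_kernel 1 (u::'a) * weight_bound \<partial>lborel)"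
    unfolding smoothed_weight_eq_gauss_integral
    using integrable_smoothed_weight_integrand integrable_gauss_kernel_1 exp_neg_le_weight_bound
    by (intro Bochner_Integration.integral_mono) (auto intro!: mult_left_mono gauss_kernel_nonneg)
  also have "\<dots> = weight_bound"
    using integral_gauss_kernel_1 by simp
  finally show ?thesis .
qed

lemma smoothed_weight_pos: "0 < smoothed_weight y"
proof -
  have "0 \<le> smoothed_weight y"
    unfolding smoothed_weight_eq_gauss_integral by (simp add: gauss_kernel_nonneg)
  moreover have "smoothed_weight y \<noteq> 0"
  proof
    assume "smoothed_weight y = 0"
    then have "AE u in lborel. gauss_kernel 1 u * exp (- E (y + sqrt t *\<^sub>R u)) = 0"
      unfolding smoothed_weight_eq_gauss_integral using integrable_smoothed_weight_integrand
      by (subst (asm) integral_nonneg_eq_0_iff_AE) (auto simp: gauss_kernel_nonneg)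
    then have "AE u in (lborel :: 'a measure). False"
      by eventually_elim (metis gauss_kernel_pos exp_gt_zero mult_pos_pos less_irrefl zero_less_one)
    then show False
      by (simp add: ae_filter_eq_bot_iff trivial_limit_def[symmetric])
  qed
  ultimately show ?thesis
    by simp
qed

end

context ed_sampling
begin

definition ideal_term :: "nat \<Rightarrow> 'w \<Rightarrow> real" where
  "ideal_term i \<omega> = E (Z (Xs i) \<omega>) - U_gamma t E (Z (Xs i) \<omega> + sqrt t *\<^sub>R Z (Xi i) \<omega>)"

lemma ideal_term_measurable [measurable]: "ideal_term i \<in> borel_measurable P"
  unfolding ideal_term_def by measurable

lemma indep_ideal_term: "indep_vars (\<lambda>_. borel) ideal_term UNIV"
proof -
  define K where "K i = {Xs i, Xi i}" for i
  have "disjoint_family_on K UNIV"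
    unfolding K_def disjoint_family_on_def by auto
  then have blocks: "indep_vars (\<lambda>i. Pi\<^sub>M (K i) (\<lambda>_. borel)) (\<lambda>i \<omega>. restrict (\<lambda>k. Z k \<omega>) (K i)) UNIV"
    by (intro indep_vars_restrict[OF indep]) auto
  define F where "F i f = E (f (Xs i)) - U_gamma t E (f (Xs i) + sqrt t *\<^sub>R f (Xi i))"
    for i and f :: "idx \<Rightarrow> 'a"
  have "F i \<in> borel_measurable (Pi\<^sub>M (K i) (\<lambda>_. borel))" for i
    unfolding F_def K_def by measurable
  from indep_vars_compose2[OF blocks this]
  show ?thesis
    by (simp add: F_def K_def ideal_term_def[abs_def])
qed

definition sample_measure :: "('a \<times> 'a) measure" where
  "sample_measure = density lborel (\<lambda>x. ennreal (p x)) \<Otimes>\<^sub>M density lborel (\<lambda>x. ennreal (gauss_kernel 1 x))"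

lemma pair_prob_space_sample:
  "pair_prob_space (density lborel (\<lambda>x. ennreal (p x)))
     (density lborel (\<lambda>x. ennreal (gauss_kernel 1 x)) :: 'a measure)"
proof -
  have "prob_space (density lborel (\<lambda>x. ennreal (p x)))"
    using dist_x[of 0] prob_space_distr[of "Z (Xs 0)" lborel]
    by (simp add: distributed_distr_eq_density distributed_measurable)
  moreover have "prob_space (density lborel (\<lambda>x. ennreal (gauss_kernel 1 x)) :: 'a measure)"
    using dist_xi[of 0] prob_space_distr[of "Z (Xi 0)" lborel]
    by (simp add: distributed_distr_eq_density distributed_measurable)
  ultimately show ?thesis
    by (simp add: pair_prob_space_def pair_sigma_finite_def prob_space_imp_sigma_finite)
qed

lemma distr_sample_pair:
  "distr P (borel \<Otimes>\<^sub>M borel) (\<lambda>\<omega>. (Z (Xs i) \<omega>, Z (Xi i) \<omega>)) = sample_measure"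
proof -
  have "indep_var borel (\<lambda>\<omega>. id (Z (Xs i) \<omega>)) borel (\<lambda>\<omega>. id (Z (Xi i) \<omega>))"
    by (rule indep_vars_pair_compose[OF indep]) auto
  then have "distr P (borel \<Otimes>\<^sub>M borel) (\<lambda>\<omega>. (Z (Xs i) \<omega>, Z (Xi i) \<omega>))
      = distr P borel (Z (Xs i)) \<Otimes>\<^sub>M distr P borel (Z (Xi i))"
    unfolding indep_var_distribution_eq by simp
  also have "\<dots> = sample_measure"
    using dist_x[of i] dist_xi[of i]
    by (simp add: sample_measure_def distributed_distr_eq_density distr_lborel_eq_distr_borel[symmetric])
  finally show ?thesis .
qed

lemma distr_ideal_term: "distr P borel (ideal_term i) = distr P borel (ideal_term 0)"
proof -
  have "distr P borel (ideal_term i) = distr sample_measure borel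
      (\<lambda>z. E (fst z) - U_gamma t E (fst z + sqrt t *\<^sub>R snd z))" for i
  proof -
    have "distr P borel (ideal_term i) = distr (distr P (borel \<Otimes>\<^sub>M borel) (\<lambda>\<omega>. (Z (Xs i) \<omega>, Z (Xi i) \<omega>)))
        borel (\<lambda>z. E (fst z) - U_gamma t E (fst z + sqrt t *\<^sub>R snd z))"
      by (subst distr_distr) (auto simp: comp_def ideal_term_def[abs_def])
    then show ?thesis
      by (simp add: distr_sample_pair)
  qed
  then show ?thesis
    by simp
qed

lemma integrable_smoothed_energy_sample:
  "integrable sample_measure (\<lambda>z. U_gamma t E (fst z + sqrt t *\<^sub>R snd z))"
proof -
  interpret pair_prob_space "density lborel (\<lambda>x. ennreal (p x))"
      "density lborel (\<lambda>x. ennreal (gauss_kernel 1 x)) :: 'a measure"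
    by (rule pair_prob_space_sample)
  have [measurable]: "(\<lambda>z. U_gamma t E (fst z + sqrt t *\<^sub>R snd z)) \<in> borel_measurable sample_measure"
    unfolding sample_measure_def by (simp cong: measurable_cong_sets)
  have "(\<integral>\<^sup>+z. ennreal (norm (U_gamma t E (fst z + sqrt t *\<^sub>R snd z))) \<partial>sample_measure)
      = (\<integral>\<^sup>+x. ennreal (p x) * (\<integral>\<^sup>+u. ennreal (gauss_kernel 1 u) * ennreal \<bar>U_gamma t E (x + sqrt t *\<^sub>R u)\<bar> \<partial>lborel) \<partial>lborel)"
    unfolding sample_measure_def
    by (subst M2.nn_integral_fst[symmetric]) (simp_all add: nn_integral_density)
  also have "\<dots> = (\<integral>\<^sup>+x. ennreal (p x) * (\<integral>\<^sup>+y. ennreal (gauss_kernel t (y - x)) * ennreal \<bar>U_gamma t E y\<bar> \<partial>lborel) \<partial>lborel)"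
    by (subst nn_integral_gauss_kernel_shift_scale[OF t_pos]) auto
  also have "\<dots> = (\<integral>\<^sup>+x. \<integral>\<^sup>+y. ennreal (norm ((\<lambda>(x, y). p x * gauss_kernel t (y - x) * U_gamma t E y) (x, y))) \<partial>lborel \<partial>lborel)"
    by (simp add: nn_integral_cmult[symmetric] ennreal_mult[symmetric] abs_mult p_nonneg gauss_kernel_nonneg mult.assoc)
  also have "\<dots> = (\<integral>\<^sup>+z. ennreal (norm ((\<lambda>(x, y). p x * gauss_kernel t (y - x) * U_gamma t E y) z)) \<partial>(lborel \<Otimes>\<^sub>M lborel))"
    by (rule lborel.nn_integral_fst) measurable
  also have "\<dots> < \<infinity>"
    using UG_integrable unfolding integrable_iff_bounded by simp
  finally show ?thesis
    by (simp add: integrable_iff_bounded)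
qed

lemma integral_smoothed_energy_sample:
  "(\<integral>z. U_gamma t E (fst z + sqrt t *\<^sub>R snd z) \<partial>sample_measure)
     = (\<integral>x. p x * (\<integral>y. gauss_kernel t (y - x) * U_gamma t E y \<partial>lborel) \<partial>lborel)"
proof -
  interpret pair_prob_space "density lborel (\<lambda>x. ennreal (p x))"
      "density lborel (\<lambda>x. ennreal (gauss_kernel 1 x)) :: 'a measure"
    by (rule pair_prob_space_sample)
  have "(\<integral>z. U_gamma t E (fst z + sqrt t *\<^sub>R snd z) \<partial>sample_measure)
      = (\<integral>x. p x * (\<integral>u. gauss_kernel 1 u * U_gamma t E (x + sqrt t *\<^sub>R u) \<partial>lborel) \<partial>lborel)"
    using integrable_smoothed_energy_sample unfolding sample_measure_def
    by (subst integral_fst'[symmetric]) (simp_all add: integral_real_density p_nonneg gauss_kernel_nonneg)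
  also have "\<dots> = (\<integral>x. p x * (\<integral>y. gauss_kernel t (y - x) * U_gamma t E y \<partial>lborel) \<partial>lborel)"
    by (subst integral_gauss_kernel_shift_scale[OF t_pos]) auto
  finally show ?thesis .
qed

lemma integrable_ideal_term: "integrable P (ideal_term i)"
  and expectation_ideal_term: "expectation (ideal_term i) = ED_gamma t p E"
proof -
  let ?pair = "\<lambda>\<omega>. (Z (Xs i) \<omega>, Z (Xi i) \<omega>)"
  let ?U = "\<lambda>z. U_gamma t E (fst z + sqrt t *\<^sub>R snd z)"
  have E_int: "integrable P (\<lambda>\<omega>. E (Z (Xs i) \<omega>))"
    using distributed_integrable[OF dist_x[of i], of E] E_integrable p_nonneg by simp
  have U_int: "integrable P (\<lambda>\<omega>. ?U (?pair \<omega>))"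
    using integrable_smoothed_energy_sample
    unfolding distr_sample_pair[of i, symmetric] by (subst (asm) integrable_distr_eq) auto
  have U_integral: "expectation (\<lambda>\<omega>. ?U (?pair \<omega>)) = (\<integral>z. ?U z \<partial>sample_measure)"
    unfolding distr_sample_pair[of i, symmetric] by (rule integral_distr[symmetric]) auto
  have ideal: "ideal_term i = (\<lambda>\<omega>. E (Z (Xs i) \<omega>) - ?U (?pair \<omega>))"
    by (simp add: ideal_term_def[abs_def])
  show "integrable P (ideal_term i)"
    unfolding ideal using E_int U_int by simp
  show "expectation (ideal_term i) = ED_gamma t p E"
    unfolding ideal ED_gamma_def
    using E_int U_int U_integral integral_smoothed_energy_sample
      distributed_integral[OF dist_x[of i], of E] p_nonneg
    by simp
qed

lemma AE_ideal_mean_tendsto: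
  "AE \<omega> in P. (\<lambda>n. (\<Sum>i<n. ideal_term i \<omega>) / real n) \<longlonglongrightarrow> ED_gamma t p E"
  using strong_law_of_large_numbers[OF indep_ideal_term distr_ideal_term integrable_ideal_term]
  by (simp add: expectation_ideal_term)

end

section \<open>Inner Monte Carlo averages\<close>

lemma abs_ln_diff_less:
  fixes a g \<epsilon> :: real
  assumes g: "0 < g" and \<epsilon>: "0 < \<epsilon>" and close: "\<bar>a - g\<bar> < g * min (1/2) (\<epsilon>/4)"
  shows "0 < a" and "\<bar>ln a - ln g\<bar> < \<epsilon>"
proof -
  have "g * min (1/2) (\<epsilon>/4) \<le> g / 2" and "g * min (1/2) (\<epsilon>/4) \<le> g * (\<epsilon>/4)"
    using g by (auto intro: mult_left_mono)
  with close have half: "g / 2 < a" and quarter: "\<bar>a - g\<bar> < g * (\<epsilon>/4)"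
    by linarith+
  then show a: "0 < a"
    using g by linarith
  have "ln a - ln g \<le> a / g - 1"
    using ln_le_minus_one[of "a / g"] a g by (simp add: ln_div)
  also have "\<dots> = (a - g) / g"
    using g by (simp add: field_simps)
  also have "\<dots> < \<epsilon>"
  proof -
    have "g * (\<epsilon>/4) < g * \<epsilon>"
      using g \<epsilon> by simp
    then have "a - g < g * \<epsilon>"
      using quarter abs_ge_self[of "a - g"] by linarith
    then show ?thesis
      using g by (simp add: pos_divide_less_eq mult.commute)
  qed
  finally have upper: "ln a - ln g < \<epsilon>" .
  have "ln g - ln a \<le> g / a - 1"
    using ln_le_minus_one[of "g / a"] a g by (simp add: ln_div)
  also have "\<dots> = (g - a) / a"
    using a by (simp add: field_simps)
  also have "\<dots> < \<epsilon>"
  proof -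
    have "g - a < g * (\<epsilon>/4)"
      using quarter by linarith
    also have "\<dots> < \<epsilon> * a"
      using half g \<epsilon> by (simp add: mult_strict_left_mono algebra_simps)
    finally show ?thesis
      using a by (simp add: pos_divide_less_eq mult.commute)
  qed
  finally show "\<bar>ln a - ln g\<bar> < \<epsilon>"
    using upper by linarith
qed

context prob_space
begin

lemma expectation_indep_pair_eq_iterated_integral:
  assumes indep: "indep_var N1 R N2 V" and [measurable]: "F \<in> borel_measurable (N1 \<Otimes>\<^sub>M N2)"
    and bound: "\<And>z. \<bar>F z\<bar> \<le> (B::real)"
  shows "expectation (\<lambda>\<omega>. F (R \<omega>, V \<omega>)) = (\<integral>r. (\<integral>v. F (r, v) \<partial>distr M N2 V) \<partial>distr M N1 R)"
proof -
  have [measurable]: "R \<in> measurable M N1" "V \<in> measurable M N2"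
    using indep by (auto dest: indep_var_rv1 indep_var_rv2)
  interpret R: prob_space "distr M N1 R"
    by (rule prob_space_distr) simp
  interpret V: prob_space "distr M N2 V"
    by (rule prob_space_distr) simp
  interpret RV: pair_prob_space "distr M N1 R" "distr M N2 V" ..
  have joint: "distr M N1 R \<Otimes>\<^sub>M distr M N2 V = distr M (N1 \<Otimes>\<^sub>M N2) (\<lambda>\<omega>. (R \<omega>, V \<omega>))"
    using indep unfolding indep_var_distribution_eq by simp
  have "F \<in> borel_measurable (distr M N1 R \<Otimes>\<^sub>M distr M N2 V)"
    unfolding joint by simp
  then have "integrable (distr M N1 R \<Otimes>\<^sub>M distr M N2 V) F"
    using bound by (intro RV.P.integrable_const_bound[where B=B]) auto
  moreover have "expectation (\<lambda>\<omega>. F (R \<omega>, V \<omega>)) = integral\<^sup>L (distr M N1 R \<Otimes>\<^sub>M distr M N2 V) F"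
    unfolding joint by (rule integral_distr[symmetric]) auto
  ultimately show ?thesis
    by (simp add: RV.integral_fst')
qed

end

context ed_sampling
begin

definition noisy_sample :: "nat \<Rightarrow> 'w \<Rightarrow> 'a" where
  "noisy_sample i \<omega> = Z (Xs i) \<omega> + sqrt t *\<^sub>R Z (Xi i) \<omega>"

definition inner_fluct :: "nat \<Rightarrow> nat \<Rightarrow> 'w \<Rightarrow> real" where
  "inner_fluct i j \<omega> = exp (- E (noisy_sample i \<omega> + sqrt t *\<^sub>R Z (Xi' i j) \<omega>))
                        - smoothed_weight (noisy_sample i \<omega>)"

lemma noisy_sample_measurable [measurable]: "noisy_sample i \<in> borel_measurable P"
  unfolding noisy_sample_def by measurable

lemma inner_fluct_measurable [measurable]: "inner_fluct i j \<in> borel_measurable P"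
  unfolding inner_fluct_def by measurable

lemma abs_exp_neg_minus_smoothed_weight_le: "\<bar>exp (- E x) - smoothed_weight y\<bar> \<le> weight_bound"
  using exp_neg_le_weight_bound[of x] smoothed_weight_le[of y] smoothed_weight_pos[of y]
    exp_gt_zero[of "- E x"] by linarith

lemma abs_inner_fluct_le: "\<bar>inner_fluct i j \<omega>\<bar> \<le> weight_bound"
  unfolding inner_fluct_def by (rule abs_exp_neg_minus_smoothed_weight_le)

lemma integral_fluct_gauss_kernel_1:
  "(\<integral>v. (exp (- E (y + sqrt t *\<^sub>R v)) - smoothed_weight y) * c
       \<partial>density lborel (\<lambda>x. ennreal (gauss_kernel 1 x))) = 0"
proof -
  have "(\<integral>v. (exp (- E (y + sqrt t *\<^sub>R v)) - smoothed_weight y) * c \<partial>density lborel (\<lambda>x. ennreal (gauss_kernel 1 x)))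
      = (\<integral>v. c * (gauss_kernel 1 v * exp (- E (y + sqrt t *\<^sub>R v))) - c * smoothed_weight y * gauss_kernel 1 v \<partial>lborel)"
    by (subst integral_real_density) (auto simp: gauss_kernel_nonneg algebra_simps)
  also have "\<dots> = c * (\<integral>v. gauss_kernel 1 v * exp (- E (y + sqrt t *\<^sub>R v)) \<partial>lborel)
      - c * smoothed_weight y * (\<integral>v. gauss_kernel 1 (v::'a) \<partial>lborel)"
    using integrable_smoothed_weight_integrand[of y] integrable_gauss_kernel_1 by simp
  also have "\<dots> = 0"
    using smoothed_weight_eq_gauss_integral[of y] integral_gauss_kernel_1 by simp
  finally show ?thesis .
qed

text \<open>Given all other coordinates, the \<open>j\<close>-th fluctuation integrates to zero against the
  independent Gaussian noise \<open>Z (Xi' i j)\<close>.\<close>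
lemma inner_fluct_orthogonal:
  assumes "j \<noteq> k"
  shows "expectation (\<lambda>\<omega>. inner_fluct i j \<omega> * inner_fluct i k \<omega>) = 0"
proof -
  define A where "A = {Xs i, Xi i, Xi' i k}"
  define B where "B = {Xi' i j}"
  let ?ZA = "\<lambda>\<omega>. restrict (\<lambda>l. Z l \<omega>) A" and ?ZB = "\<lambda>\<omega>. restrict (\<lambda>l. Z l \<omega>) B"
  have "A \<inter> B = {}"
    using assms by (auto simp: A_def B_def)
  then have indep_AB: "indep_var (Pi\<^sub>M A (\<lambda>_. borel)) ?ZA (Pi\<^sub>M B (\<lambda>_. borel)) ?ZB"
    by (intro indep_var_restrict[OF indep]) auto
  define y where "y f = f (Xs i) + sqrt t *\<^sub>R f (Xi i)" for f :: "idx \<Rightarrow> 'a"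
  define H where "H f v = (exp (- E (y f + sqrt t *\<^sub>R v)) - smoothed_weight (y f))
      * (exp (- E (y f + sqrt t *\<^sub>R f (Xi' i k))) - smoothed_weight (y f))" for f v
  have H_measurable [measurable]: "H f \<in> borel_measurable borel" for f
    unfolding H_def by measurable
  define F where "F z = H (fst z) (snd z (Xi' i j))" for z :: "(idx \<Rightarrow> 'a) \<times> (idx \<Rightarrow> 'a)"
  have F_measurable: "F \<in> borel_measurable (Pi\<^sub>M A (\<lambda>_. borel) \<Otimes>\<^sub>M Pi\<^sub>M B (\<lambda>_. borel))"
    unfolding F_def H_def y_def A_def B_def by measurable
  have F_bound: "\<bar>F z\<bar> \<le> weight_bound * weight_bound" for z
    unfolding F_def H_def abs_mult using weight_bound_pos
    by (intro mult_mono abs_exp_neg_minus_smoothed_weight_le) auto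
  have noise: "distr P borel (Z (Xi' i j)) = density lborel (\<lambda>x. ennreal (gauss_kernel 1 x))"
    using dist_xi'[of i j] by (simp add: distributed_distr_eq_density distr_lborel_eq_distr_borel[symmetric])
  have inner: "(\<integral>g. F (r, g) \<partial>distr P (Pi\<^sub>M B (\<lambda>_. borel)) ?ZB) = 0" for r
  proof -
    have "(\<integral>g. F (r, g) \<partial>distr P (Pi\<^sub>M B (\<lambda>_. borel)) ?ZB) = (\<integral>\<omega>. H r (Z (Xi' i j) \<omega>) \<partial>P)"
      by (subst integral_distr) (auto simp: F_def B_def)
    also have "\<dots> = (\<integral>v. H r v \<partial>distr P borel (Z (Xi' i j)))"
      by (subst integral_distr) auto
    also have "\<dots> = 0"
      unfolding noise H_def by (rule integral_fluct_gauss_kernel_1)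
    finally show ?thesis .
  qed
  have "expectation (\<lambda>\<omega>. inner_fluct i j \<omega> * inner_fluct i k \<omega>) = expectation (\<lambda>\<omega>. F (?ZA \<omega>, ?ZB \<omega>))"
    by (simp add: F_def H_def inner_fluct_def y_def noisy_sample_def A_def B_def)
  also have "\<dots> = (\<integral>r. (\<integral>g. F (r, g) \<partial>distr P (Pi\<^sub>M B (\<lambda>_. borel)) ?ZB) \<partial>distr P (Pi\<^sub>M A (\<lambda>_. borel)) ?ZA)"
    by (rule expectation_indep_pair_eq_iterated_integral[OF indep_AB F_measurable F_bound])
  also have "\<dots> = 0"
    by (simp add: inner)
  finally show ?thesis .
qed

lemma expectation_inner_fluct_sum_square_le:
  "expectation (\<lambda>\<omega>. (\<Sum>j<M. inner_fluct i j \<omega>)\<^sup>2) \<le> real M * weight_bound\<^sup>2"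
proof -
  have square: "(inner_fluct i j \<omega>)\<^sup>2 \<le> weight_bound\<^sup>2" for j \<omega>
    using abs_inner_fluct_le[of i j \<omega>] weight_bound_pos by (simp add: abs_le_square_iff[symmetric])
  have "expectation (\<lambda>\<omega>. (\<Sum>j<M. inner_fluct i j \<omega>)\<^sup>2) = (\<Sum>j<M. expectation (\<lambda>\<omega>. (inner_fluct i j \<omega>)\<^sup>2))"
    by (rule expectation_square_sum_orthogonal[where B="\<lambda>_. weight_bound"])
      (auto intro: abs_inner_fluct_le inner_fluct_orthogonal)
  also have "\<dots> \<le> (\<Sum>j<M. weight_bound\<^sup>2)"
  proof (rule sum_mono)
    fix j
    have "expectation (\<lambda>\<omega>. (inner_fluct i j \<omega>)\<^sup>2) \<le> expectation (\<lambda>\<omega>. weight_bound\<^sup>2)"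
      using square by (intro integral_mono integrable_const_bound[where B="weight_bound\<^sup>2"]) auto
    then show "expectation (\<lambda>\<omega>. (inner_fluct i j \<omega>)\<^sup>2) \<le> weight_bound\<^sup>2"
      by (simp add: prob_space)
  qed
  finally show ?thesis
    by simp
qed

lemma prob_inner_mean_fluct_ge_le:
  assumes M: "0 < M" and c: "0 < c"
  shows "prob {\<omega>\<in>space P. c \<le> \<bar>(\<Sum>j<M. inner_fluct i j \<omega>) / real M\<bar>} \<le> weight_bound\<^sup>2 / (real M * c\<^sup>2)"
proof -
  have "\<bar>\<Sum>j<M. inner_fluct i j \<omega>\<bar> \<le> (\<Sum>j<M. weight_bound)" for \<omega>
    by (intro order_trans[OF sum_abs] sum_mono abs_inner_fluct_le)
  then have "((\<Sum>j<M. inner_fluct i j \<omega>) / real M)\<^sup>2 \<le> weight_bound\<^sup>2" for \<omega>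
    using M weight_bound_pos
    by (simp add: abs_le_square_iff[symmetric] abs_divide divide_le_eq mult.commute)
  then have int: "integrable P (\<lambda>\<omega>. ((\<Sum>j<M. inner_fluct i j \<omega>) / real M)\<^sup>2)"
    by (intro integrable_const_bound[where B="weight_bound\<^sup>2"]) auto
  have "prob {\<omega>\<in>space P. c \<le> \<bar>(\<Sum>j<M. inner_fluct i j \<omega>) / real M\<bar>}
      \<le> expectation (\<lambda>\<omega>. ((\<Sum>j<M. inner_fluct i j \<omega>) / real M)\<^sup>2) / c\<^sup>2"
    by (rule prob_abs_ge_le_second_moment[OF _ int c]) simp
  also have "\<dots> = expectation (\<lambda>\<omega>. (\<Sum>j<M. inner_fluct i j \<omega>)\<^sup>2) / (real M)\<^sup>2 / c\<^sup>2"
    by (simp add: power_divide)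
  also have "\<dots> \<le> real M * weight_bound\<^sup>2 / (real M)\<^sup>2 / c\<^sup>2"
    using c by (intro divide_right_mono expectation_inner_fluct_sum_square_le) auto
  also have "\<dots> = weight_bound\<^sup>2 / (real M * c\<^sup>2)"
    using M by (simp add: power2_eq_square)
  finally show ?thesis .
qed

end

lemma LIMSEQ_mean_of_close_rows:
  fixes a :: "nat \<Rightarrow> nat \<Rightarrow> real" and b :: "nat \<Rightarrow> real"
  assumes close: "eventually (\<lambda>N. \<forall>i<N. \<bar>a N i - b i\<bar> < 1 / real (Suc N)) sequentially"
    and mean: "(\<lambda>N. (\<Sum>i<N. b i) / real N) \<longlonglongrightarrow> L"
  shows "(\<lambda>N. (1 / real N) * (\<Sum>i<N. a N i)) \<longlonglongrightarrow> L"
proof -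
  define d where "d N = (1 / real N) * (\<Sum>i<N. a N i) - (\<Sum>i<N. b i) / real N" for N
  have small: "\<bar>d N\<bar> < 1 / real (Suc N)" if "\<forall>i<N. \<bar>a N i - b i\<bar> < 1 / real (Suc N)" "0 < N" for N
  proof -
    have "\<bar>d N\<bar> = \<bar>\<Sum>i<N. a N i - b i\<bar> / real N"
      by (simp add: d_def sum_subtractf abs_divide flip: diff_divide_distrib)
    also have "\<dots> \<le> (\<Sum>i<N. \<bar>a N i - b i\<bar>) / real N"
      by (intro divide_right_mono sum_abs) simp
    also have "\<dots> < (\<Sum>i<N. 1 / real (Suc N)) / real N"
      using that by (intro divide_strict_right_mono sum_strict_mono) auto
    also have "\<dots> = 1 / real (Suc N)"
      using that by simp
    finally show ?thesis .
  qed
  have "eventually (\<lambda>N. \<bar>d N\<bar> < 1 / real (Suc i)) sequentially" for i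
    using eventually_conj[OF close eventually_ge_at_top[of "Suc i"]]
  proof eventually_elim
    case (elim N)
    then have "\<bar>d N\<bar> < 1 / real (Suc N)"
      by (intro small) auto
    also have "\<dots> \<le> 1 / real (Suc i)"
      using elim by (simp add: frac_le)
    finally show ?case .
  qed
  then have "d \<longlonglongrightarrow> 0"
    by (simp add: LIMSEQ_zero_iff_eventually_less_inverse_Suc)
  from tendsto_add[OF this mean] show ?thesis
    by (simp add: d_def)
qed

context ed_sampling
begin

definition inner_term :: "nat \<Rightarrow> nat \<Rightarrow> 'w \<Rightarrow> real" where
  "inner_term M i \<omega> = ln (w / real M + (1 / real M) * (\<Sum>j<M. exp (E (Z (Xs i) \<omega>)
      - E (Z (Xs i) \<omega> + sqrt t *\<^sub>R Z (Xi i) \<omega> + sqrt t *\<^sub>R Z (Xi' i j) \<omega>))))"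

lemma inner_term_measurable [measurable]: "inner_term M i \<in> borel_measurable P"
  unfolding inner_term_def by measurable

lemma emp_loss_eq: "emp_loss t M w E Z N \<omega> = (1 / real N) * (\<Sum>i<N. inner_term M i \<omega>)"
  unfolding emp_loss_def inner_term_def ..

lemma inner_term_close:
  assumes M: "0 < M" and \<epsilon>: "0 < \<epsilon>" and \<delta>: "\<delta> \<le> smoothed_weight (noisy_sample i \<omega>)"
    and small: "w * weight_bound / real M + \<bar>(\<Sum>j<M. inner_fluct i j \<omega>) / real M\<bar> < \<delta> * min (1/2) (\<epsilon>/4)"
  shows "\<bar>inner_term M i \<omega> - ideal_term i \<omega>\<bar> < \<epsilon>"
proof -
  define x where "x = E (Z (Xs i) \<omega>)"
  define g where "g = smoothed_weight (noisy_sample i \<omega>)"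
  define S where "S = (\<Sum>j<M. inner_fluct i j \<omega>) / real M"
  define a where "a = w * exp (- x) / real M + g + S"
  have g: "0 < g"
    unfolding g_def by (rule smoothed_weight_pos)
  have "(\<Sum>j<M. exp (E (Z (Xs i) \<omega>) - E (Z (Xs i) \<omega> + sqrt t *\<^sub>R Z (Xi i) \<omega> + sqrt t *\<^sub>R Z (Xi' i j) \<omega>)))
      = exp x * (\<Sum>j<M. inner_fluct i j \<omega> + g)"
    unfolding sum_distrib_left
    by (intro sum.cong refl) (simp add: x_def g_def inner_fluct_def noisy_sample_def exp_diff exp_minus divide_inverse add.assoc)
  also have "\<dots> = exp x * (real M * (S + g))"
    using M by (simp add: S_def sum.distrib field_simps)
  finally have sum_exp: "(\<Sum>j<M. exp (E (Z (Xs i) \<omega>)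
      - E (Z (Xs i) \<omega> + sqrt t *\<^sub>R Z (Xi i) \<omega> + sqrt t *\<^sub>R Z (Xi' i j) \<omega>)))
      = exp x * (real M * (S + g))" .
  have arg: "w / real M + 1 / real M * (exp x * (real M * (S + g))) = exp x * a"
    using M by (simp add: a_def exp_minus field_simps)
  have "inner_term M i \<omega> = ln (exp x * a)"
    unfolding inner_term_def sum_exp arg ..
  have "\<bar>a - g\<bar> \<le> w * exp (- x) / real M + \<bar>S\<bar>"
    unfolding a_def using w_nonneg abs_triangle_ineq[of "w * exp (- x) / real M" S] by simp
  also have "w * exp (- x) / real M \<le> w * weight_bound / real M"
    using w_nonneg exp_neg_le_weight_bound[of "Z (Xs i) \<omega>"] unfolding x_def
    by (intro divide_right_mono mult_left_mono) auto
  also have "w * weight_bound / real M + \<bar>S\<bar> < \<delta> * min (1/2) (\<epsilon>/4)"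
    using small by (simp add: S_def)
  also have "\<dots> \<le> g * min (1/2) (\<epsilon>/4)"
    using \<delta> \<epsilon> by (intro mult_right_mono) (auto simp: g_def)
  finally have close: "\<bar>a - g\<bar> < g * min (1/2) (\<epsilon>/4)"
    by simp
  have "inner_term M i \<omega> = x + ln a"
    using \<open>inner_term M i \<omega> = ln (exp x * a)\<close> abs_ln_diff_less(1)[OF g \<epsilon> close] by (simp add: ln_mult)
  moreover have "ideal_term i \<omega> = x + ln g"
    by (simp add: ideal_term_def U_gamma_eq x_def g_def noisy_sample_def)
  ultimately show ?thesis
    using abs_ln_diff_less(2)[OF g \<epsilon> close] by simp
qed

lemma prob_smoothed_weight_less:
  assumes \<eta>: "0 < \<eta>"
  obtains \<delta> where "0 < \<delta>" "prob {\<omega>\<in>space P. smoothed_weight (noisy_sample i \<omega>) < \<delta>} < \<eta>"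
proof -
  define A where "A n = {\<omega>\<in>space P. smoothed_weight (noisy_sample i \<omega>) < 1 / real (Suc n)}" for n
  have "range A \<subseteq> sets P"
    unfolding A_def by auto
  moreover have "decseq A"
  proof (rule decseq_SucI)
    fix n
    have "1 / real (Suc (Suc n)) \<le> 1 / real (Suc n)"
      by (intro divide_left_mono) auto
    then show "A (Suc n) \<subseteq> A n"
      unfolding A_def by (auto dest: order.strict_trans2)
  qed
  ultimately have "(\<lambda>n. prob (A n)) \<longlonglongrightarrow> prob (\<Inter>n. A n)"
    by (rule finite_Lim_measure_decseq)
  moreover have "(\<Inter>n. A n) = {}"
  proof -
    have "\<exists>n. 1 / real (Suc n) \<le> smoothed_weight (noisy_sample i \<omega>)" for \<omega>
    proof -
      obtain n where "inverse (real (Suc n)) < smoothed_weight (noisy_sample i \<omega>)"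
        using reals_Archimedean[OF smoothed_weight_pos] by blast
      then show ?thesis
        by (intro exI[of _ n]) (simp add: inverse_eq_divide)
    qed
    then show ?thesis
      by (auto simp: A_def) (meson not_le)
  qed
  ultimately have "(\<lambda>n. prob (A n)) \<longlonglongrightarrow> 0"
    by simp
  from order_tendstoD(2)[OF this \<eta>] obtain n where "prob (A n) < \<eta>"
    by (auto simp: eventually_sequentially)
  then show thesis
    by (intro that[of "1 / real (Suc n)"]) (auto simp: A_def)
qed

lemma inner_term_tendsto_in_prob:
  assumes \<epsilon>: "0 < \<epsilon>" and \<eta>: "0 < \<eta>"
  shows "\<exists>M0. \<forall>M\<ge>M0. prob {\<omega>\<in>space P. \<epsilon> \<le> \<bar>inner_term M i \<omega> - ideal_term i \<omega>\<bar>} < \<eta>"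
proof -
  obtain \<delta> where \<delta>: "0 < \<delta>" and low_weight: "prob {\<omega>\<in>space P. smoothed_weight (noisy_sample i \<omega>) < \<delta>} < \<eta> / 2"
    using prob_smoothed_weight_less[of "\<eta>/2"] \<eta> by auto
  define c where "c = \<delta> * min (1/2) (\<epsilon>/4)"
  have c: "0 < c"
    using \<delta> \<epsilon> by (simp add: c_def)
  obtain M0 :: nat where M0: "max (w * weight_bound / (c/2)) (weight_bound\<^sup>2 / ((c/2)\<^sup>2 * (\<eta>/2))) < M0"
    using reals_Archimedean2 by blast
  have "prob {\<omega>\<in>space P. \<epsilon> \<le> \<bar>inner_term M i \<omega> - ideal_term i \<omega>\<bar>} < \<eta>" if "M0 \<le> M" for M
  proof -
    have "0 < weight_bound\<^sup>2 / ((c/2)\<^sup>2 * (\<eta>/2))"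
      using weight_bound_pos c \<eta> by simp
    then have M: "0 < M" "0 < real M"
      using M0 that by linarith+
    let ?fluct = "{\<omega>\<in>space P. c / 2 \<le> \<bar>(\<Sum>j<M. inner_fluct i j \<omega>) / real M\<bar>}"
    have "w * weight_bound / (c/2) < real M" "weight_bound\<^sup>2 / ((c/2)\<^sup>2 * (\<eta>/2)) < real M"
      using M0 that by linarith+
    then have bias: "w * weight_bound / real M < c / 2"
      and variance: "weight_bound\<^sup>2 / (real M * (c/2)\<^sup>2) < \<eta> / 2"
      using c \<eta> M by (simp_all add: field_simps)
    have "{\<omega>\<in>space P. \<epsilon> \<le> \<bar>inner_term M i \<omega> - ideal_term i \<omega>\<bar>}
        \<subseteq> {\<omega>\<in>space P. smoothed_weight (noisy_sample i \<omega>) < \<delta>} \<union> ?fluct"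
    proof
      fix \<omega> assume \<omega>: "\<omega> \<in> {\<omega>\<in>space P. \<epsilon> \<le> \<bar>inner_term M i \<omega> - ideal_term i \<omega>\<bar>}"
      show "\<omega> \<in> {\<omega>\<in>space P. smoothed_weight (noisy_sample i \<omega>) < \<delta>} \<union> ?fluct"
      proof (rule ccontr)
        assume "\<omega> \<notin> {\<omega>\<in>space P. smoothed_weight (noisy_sample i \<omega>) < \<delta>} \<union> ?fluct"
        then have weight: "\<delta> \<le> smoothed_weight (noisy_sample i \<omega>)"
          and "\<bar>(\<Sum>j<M. inner_fluct i j \<omega>) / real M\<bar> < c / 2"
          using \<omega> by auto
        then have "w * weight_bound / real M + \<bar>(\<Sum>j<M. inner_fluct i j \<omega>) / real M\<bar> < \<delta> * min (1/2) (\<epsilon>/4)"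
          using bias unfolding c_def by linarith
        with inner_term_close[OF M(1) \<epsilon> weight] \<omega> show False
          by simp
      qed
    qed
    then have "prob {\<omega>\<in>space P. \<epsilon> \<le> \<bar>inner_term M i \<omega> - ideal_term i \<omega>\<bar>}
        \<le> prob {\<omega>\<in>space P. smoothed_weight (noisy_sample i \<omega>) < \<delta>} + prob ?fluct"
      by (intro order_trans[OF finite_measure_mono measure_Un_le]) auto
    also have "\<dots> < \<eta> / 2 + \<eta> / 2"
      using low_weight prob_inner_mean_fluct_ge_le[OF M(1), of "c/2" i] variance c by linarith
    finally show ?thesis
      by simp
  qed
  then show ?thesis
    by blast
qed

lemma exists_inner_sample_sizes:
  "\<exists>Mf. \<forall>N i. i < N \<longrightarrow>
     prob {\<omega>\<in>space P. 1 / real (Suc N) \<le> \<bar>inner_term (Mf N) i \<omega> - ideal_term i \<omega>\<bar>} < (1/2) ^ N / real (Suc N)"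
proof -
  have "\<forall>N i. \<exists>M0. \<forall>M\<ge>M0.
      prob {\<omega>\<in>space P. 1 / real (Suc N) \<le> \<bar>inner_term M i \<omega> - ideal_term i \<omega>\<bar>} < (1/2) ^ N / real (Suc N)"
    by (intro allI inner_term_tendsto_in_prob) auto
  then obtain M0 where M0: "\<And>N i M. M0 N i \<le> M \<Longrightarrow>
      prob {\<omega>\<in>space P. 1 / real (Suc N) \<le> \<bar>inner_term M i \<omega> - ideal_term i \<omega>\<bar>} < (1/2) ^ N / real (Suc N)"
    by metis
  then show ?thesis
    by (intro exI[of _ "\<lambda>N. \<Sum>k<N. M0 N k"] allI impI M0) (auto intro: member_le_sum)
qed

lemma AE_eventually_inner_terms_close:
  assumes Mf: "\<And>N i. i < N \<Longrightarrow>
     prob {\<omega>\<in>space P. 1 / real (Suc N) \<le> \<bar>inner_term (Mf N) i \<omega> - ideal_term i \<omega>\<bar>} < (1/2) ^ N / real (Suc N)"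
  shows "AE \<omega> in P. eventually (\<lambda>N. \<forall>i<N. \<bar>inner_term (Mf N) i \<omega> - ideal_term i \<omega>\<bar> < 1 / real (Suc N)) sequentially"
proof -
  define Bad where "Bad N = (\<Union>i<N. {\<omega>\<in>space P. 1 / real (Suc N) \<le> \<bar>inner_term (Mf N) i \<omega> - ideal_term i \<omega>\<bar>})" for N
  have Bad_sets [measurable]: "Bad N \<in> sets P" for N
    unfolding Bad_def by measurable
  have "prob (Bad N) \<le> (1/2) ^ N" for N
  proof -
    have "prob (Bad N) \<le> (\<Sum>i<N. prob {\<omega>\<in>space P. 1 / real (Suc N) \<le> \<bar>inner_term (Mf N) i \<omega> - ideal_term i \<omega>\<bar>})"
      unfolding Bad_def by (rule measure_UNION_le) auto
    also have "\<dots> \<le> (\<Sum>i<N. (1/2) ^ N / real (Suc N))"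
      by (intro sum_mono less_imp_le Mf) auto
    also have "\<dots> \<le> (1/2) ^ N"
      by (simp add: divide_le_eq)
    finally show ?thesis .
  qed
  then have "summable (\<lambda>N. prob (Bad N))"
    by (intro summable_comparison_test'[OF summable_geometric[of "1/2"], of 0]) auto
  from borel_cantelli_AE1[OF Bad_sets _ this]
  have "AE \<omega> in P. eventually (\<lambda>N. \<omega> \<in> space P - Bad N) sequentially"
    by (simp add: emeasure_eq_measure)
  then show ?thesis
    by (elim AE_mp) (auto intro!: AE_I2 elim!: eventually_mono simp: Bad_def not_le)
qed

end

theorem theorem3:
  fixes P :: "'w measure" and Z :: "idx \<Rightarrow> 'w \<Rightarrow> 'a::euclidean_space"
    and p :: "'a \<Rightarrow> real" and E :: "'a \<Rightarrow> real" and t w :: real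
  assumes "prob_space P"
    and p_meas: "p \<in> borel_measurable lborel"
    and p_nonneg: "\<And>x. 0 \<le> p x"
    and p_int: "(\<integral>\<^sup>+ x. ennreal (p x) \<partial>lborel) = 1"
    and E_meas: "E \<in> borel_measurable borel"
    and E_bdd: "\<exists>C. \<forall>x. exp (- E x) \<le> C"
    and E_integrable: "integrable lborel (\<lambda>x. p x * E x)"
    and UG_integrable: "integrable (lborel \<Otimes>\<^sub>M lborel)
          (\<lambda>(x, y). p x * gauss_kernel t (y - x) * U_gamma t E y)"
    and t_pos: "t > 0" and w_nonneg: "w \<ge> 0"
    and indep: "prob_space.indep_vars P (\<lambda>_. borel) Z UNIV"
    and dist_x: "\<And>i. distributed P lborel (Z (Xs i)) (\<lambda>x. ennreal (p x))"
    and dist_xi: "\<And>i. distributed P lborel (Z (Xi i)) (\<lambda>x. ennreal (gauss_kernel 1 x))"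
    and dist_xi': "\<And>i j. distributed P lborel (Z (Xi' i j)) (\<lambda>x. ennreal (gauss_kernel 1 x))"
  shows "\<exists>Mf :: nat \<Rightarrow> nat. AE \<omega> in P. \<forall>\<epsilon>>0. \<exists>N0. \<forall>N\<ge>N0.
           \<bar>emp_loss t (Mf N) w E Z N \<omega> - ED_gamma t p E\<bar> < \<epsilon>"
proof -
  interpret ed_sampling P Z p E t w
    unfolding ed_sampling_def ed_sampling_axioms_def using assms by blast
  obtain Mf where Mf: "\<And>N i. i < N \<Longrightarrow>
      prob {\<omega>\<in>space P. 1 / real (Suc N) \<le> \<bar>inner_term (Mf N) i \<omega> - ideal_term i \<omega>\<bar>} < (1/2) ^ N / real (Suc N)"
    using exists_inner_sample_sizes by blast
  have "AE \<omega> in P. eventually (\<lambda>N. \<forall>i<N. \<bar>inner_term (Mf N) i \<omega> - ideal_term i \<omega>\<bar> < 1 / real (Suc N)) sequentially"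
    using Mf by (rule AE_eventually_inner_terms_close)
  then have "AE \<omega> in P. (\<lambda>N. emp_loss t (Mf N) w E Z N \<omega>) \<longlonglongrightarrow> ED_gamma t p E"
    using AE_ideal_mean_tendsto
  proof eventually_elim
    case (elim \<omega>)
    then show ?case
      unfolding emp_loss_eq by (rule LIMSEQ_mean_of_close_rows)
  qed
  then have "AE \<omega> in P. \<forall>\<epsilon>>0. \<exists>N0. \<forall>N\<ge>N0. \<bar>emp_loss t (Mf N) w E Z N \<omega> - ED_gamma t p E\<bar> < \<epsilon>"
    by eventually_elim (simp add: LIMSEQ_iff)
  then show ?thesis
    by blast
qed

end
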